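(* For a Tychonoff space $X$ the following conditions are equivalent: (1) each compact subset of the free locally convex space $L(X)$ has finite topological dimension; (2) each bounded linearly independent subset of $L(X)$ is finite; (3) each functionally bounded subset of $X$ is finite.
   Context: The free locally convex space $L(X)$ over $X$ is a locally convex space together with a continuous map $\delta:X\to L(X)$ such that for every continuous map $f:X\to E$ into a locally convex space $E$ there is a unique continuous linear $T:L(X)\to E$ with $T\circ\delta=f$; $X$ is identified with a Hamel basis of $L(X)$. A subset $B$ of a topological vector space is bounded if for every neighborhood $U$ of zero there is $n\in\mathbb N$ with $B\subseteq nU$. A subset $B$ of a topological space $X$ is functionally bounded if $f(B)$ is bounded in $\mathbb R$ for every continuous $f:X\to\mathbb R$. *)

theory Defs
  imports "HOL-Analysis.Analysis"
begin

text \<open>Free vector space over the points of X: finitely supported real functions on topspace X.\<close>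
definition fv_space :: "'a topology \<Rightarrow> ('a \<Rightarrow> real) set" where
  "fv_space X = {f. finite {x. f x \<noteq> 0} \<and> {x. f x \<noteq> 0} \<subseteq> topspace X}"

definition fv_delta :: "'a \<Rightarrow> ('a \<Rightarrow> real)" where
  "fv_delta x = (\<lambda>y. if y = x then 1 else 0)"

definition seminorm_on :: "('a \<Rightarrow> real) set \<Rightarrow> (('a \<Rightarrow> real) \<Rightarrow> real) \<Rightarrow> bool" where
  "seminorm_on V p \<longleftrightarrow>
     (\<forall>f\<in>V. 0 \<le> p f) \<and>
     (\<forall>f\<in>V. \<forall>c. p (\<lambda>y. c * f y) = \<bar>c\<bar> * p f) \<and>
     (\<forall>f\<in>V. \<forall>g\<in>V. p (\<lambda>y. f y + g y) \<le> p f + p g)"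

definition admissible_seminorm :: "'a topology \<Rightarrow> (('a \<Rightarrow> real) \<Rightarrow> real) \<Rightarrow> bool" where
  "admissible_seminorm X p \<longleftrightarrow> seminorm_on (fv_space X) p \<and>
     (\<forall>x\<in>topspace X. \<forall>\<epsilon>>0. \<exists>U. openin X U \<and> x \<in> U \<and>
        (\<forall>y\<in>U. p (\<lambda>z. fv_delta y z - fv_delta x z) < \<epsilon>))"

text \<open>The free locally convex space L(X): the free vector space with the finest locally
  convex vector topology making delta continuous, i.e. the topology generated by all
  seminorms p for which delta is p-continuous.\<close>
definition free_lcs :: "'a topology \<Rightarrow> ('a \<Rightarrow> real) topology" where
  "free_lcs X = topology (\<lambda>S. S \<subseteq> fv_space X \<and>
     (\<forall>f\<in>S. \<exists>p \<epsilon>. admissible_seminorm X p \<and> \<epsilon> > 0 \<and>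
        {g \<in> fv_space X. p (\<lambda>y. g y - f y) < \<epsilon>} \<subseteq> S))"

definition tvs_bounded :: "('a \<Rightarrow> real) topology \<Rightarrow> ('a \<Rightarrow> real) set \<Rightarrow> bool" where
  "tvs_bounded L B \<longleftrightarrow> (\<forall>U. openin L U \<and> (\<lambda>y. 0) \<in> U \<longrightarrow>
     (\<exists>n::nat. B \<subseteq> (\<lambda>f. (\<lambda>y. real n * f y)) ` U))"

definition lin_indep :: "('a \<Rightarrow> real) set \<Rightarrow> bool" where
  "lin_indep B \<longleftrightarrow> (\<forall>S c. finite S \<and> S \<subseteq> B \<and> (\<lambda>y. \<Sum>s\<in>S. c s * s y) = (\<lambda>y. 0)
       \<longrightarrow> (\<forall>s\<in>S. c s = 0))"

definition covering_dim_le :: "'b topology \<Rightarrow> nat \<Rightarrow> bool" where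
  "covering_dim_le T n \<longleftrightarrow>
    (\<forall>\<U>. finite \<U> \<and> (\<forall>U\<in>\<U>. openin T U) \<and> \<Union>\<U> = topspace T \<longrightarrow>
      (\<exists>\<V>. finite \<V> \<and> (\<forall>V\<in>\<V>. openin T V) \<and> \<Union>\<V> = topspace T \<and>
           (\<forall>V\<in>\<V>. \<exists>U\<in>\<U>. V \<subseteq> U) \<and>
           (\<forall>x\<in>topspace T. card {V\<in>\<V>. x \<in> V} \<le> n + 1)))"

definition finite_dimensional_space :: "'b topology \<Rightarrow> bool" where
  "finite_dimensional_space T \<longleftrightarrow> (\<exists>n. covering_dim_le T n)"

definition functionally_bounded :: "'a topology \<Rightarrow> 'a set \<Rightarrow> bool" where
  "functionally_bounded X B \<longleftrightarrow> B \<subseteq> topspace X \<and>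
     (\<forall>f. continuous_map X euclideanreal f \<longrightarrow> bounded (f ` B))"

end

(* Under (3), every bounded subset B of L(X) is supported on a finite set. Indeed, its total
   support is functionally bounded: if a continuous f were unbounded on it, bump functions at
   support points where |f| takes widely separated values form a locally finite family, and the
   sum of the absolute values of their pairings is an admissible seminorm unbounded on B.
   A linearly independent set supported on a finite F has at most |F| elements, and a compact
   set supported on F carries the topology of its coordinates in R^F, so it has finite covering
   dimension. Conversely, delta maps a functionally bounded set onto a bounded linearly independent
   set; and if a functionally bounded set contains distinct points a_0, a_1, ..., then {0} together
   with the cubes {sum_{i<m} l_i delta(a_i) / (m+1)^2 | 0 <= l_i <= 1} is compact, while Lebesgue's
   covering theorem shows that it contains subspaces of every finite dimension. *)

theory Submission
  imports Defs "HOL-Library.Function_Algebras"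
begin

section \<open>The topology of the free locally convex space\<close>

lemma fv_space_zero [simp]: "(\<lambda>y. 0) \<in> fv_space X"
  by (simp add: fv_space_def)

lemma fv_space_add:
  assumes "f \<in> fv_space X" "g \<in> fv_space X"
  shows "(\<lambda>y. f y + g y) \<in> fv_space X"
proof -
  have "{x. f x + g x \<noteq> 0} \<subseteq> {x. f x \<noteq> 0} \<union> {x. g x \<noteq> 0}" by auto
  with assms show ?thesis
    unfolding fv_space_def by (auto intro: finite_subset)
qed

lemma fv_space_scale: "f \<in> fv_space X \<Longrightarrow> (\<lambda>y. c * f y) \<in> fv_space X"
  unfolding fv_space_def by (auto intro: finite_subset[of _ "{x. f x \<noteq> 0}"])

lemma fv_space_diff: "f \<in> fv_space X \<Longrightarrow> g \<in> fv_space X \<Longrightarrow> (\<lambda>y. f y - g y) \<in> fv_space X"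
  using fv_space_add[of f X "\<lambda>y. (-1) * g y"] fv_space_scale[of g X "-1"] by simp

lemma fv_space_sum:
  "finite J \<Longrightarrow> (\<And>j. j \<in> J \<Longrightarrow> f j \<in> fv_space X) \<Longrightarrow> (\<lambda>y. \<Sum>j\<in>J. f j y) \<in> fv_space X"
  by (induction J rule: finite_induct) (auto intro: fv_space_add)

lemma fv_delta_in_fv_space: "x \<in> topspace X \<Longrightarrow> fv_delta x \<in> fv_space X"
  unfolding fv_space_def fv_delta_def by auto

lemma fv_delta_inj: "inj fv_delta"
  by (rule injI) (metis fv_delta_def zero_neq_one)

lemma fv_expansion:
  assumes "finite F" "\<And>y. g y \<noteq> 0 \<Longrightarrow> y \<in> F"
  shows "g = (\<lambda>y. \<Sum>x\<in>F. g x * fv_delta x y)"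
proof
  fix y
  have "(\<Sum>x\<in>F. g x * fv_delta x y) = (\<Sum>x\<in>F. if y = x then g x else 0)"
    by (intro sum.cong) (auto simp: fv_delta_def)
  also have "\<dots> = g y"
    using assms by (cases "y \<in> F") auto
  finally show "g y = (\<Sum>x\<in>F. g x * fv_delta x y)" by simp
qed

lemma seminorm_on_nonneg: "seminorm_on V p \<Longrightarrow> f \<in> V \<Longrightarrow> 0 \<le> p f"
  by (simp add: seminorm_on_def)

lemma seminorm_on_scale: "seminorm_on V p \<Longrightarrow> f \<in> V \<Longrightarrow> p (\<lambda>y. c * f y) = \<bar>c\<bar> * p f"
  by (simp add: seminorm_on_def)

lemma seminorm_on_triangle:
  "seminorm_on V p \<Longrightarrow> f \<in> V \<Longrightarrow> g \<in> V \<Longrightarrow> p (\<lambda>y. f y + g y) \<le> p f + p g"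
  by (simp add: seminorm_on_def)

lemma seminorm_on_zero: "seminorm_on V p \<Longrightarrow> f \<in> V \<Longrightarrow> p (\<lambda>y. 0) = 0"
  using seminorm_on_scale[of V p f 0] by simp

lemma seminorm_on_abs_diff_le:
  assumes p: "seminorm_on (fv_space X) p" and "f \<in> fv_space X" "g \<in> fv_space X"
  shows "\<bar>p f - p g\<bar> \<le> p (\<lambda>y. f y - g y)"
proof -
  have fg: "(\<lambda>y. f y - g y) \<in> fv_space X" and gf: "(\<lambda>y. g y - f y) \<in> fv_space X"
    using assms by (simp_all add: fv_space_diff)
  have "p f \<le> p (\<lambda>y. f y - g y) + p g"
    using seminorm_on_triangle[OF p fg \<open>g \<in> _\<close>] by simp
  moreover have "p g \<le> p (\<lambda>y. g y - f y) + p f"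
    using seminorm_on_triangle[OF p gf \<open>f \<in> _\<close>] by simp
  moreover have "p (\<lambda>y. g y - f y) = p (\<lambda>y. f y - g y)"
    using seminorm_on_scale[OF p fg, of "-1"] by simp
  ultimately show ?thesis by linarith
qed

lemma seminorm_on_lincomb:
  assumes p: "seminorm_on (fv_space X) p" and "finite J" "\<And>j. j \<in> J \<Longrightarrow> f j \<in> fv_space X"
  shows "p (\<lambda>y. \<Sum>j\<in>J. c j * f j y) \<le> (\<Sum>j\<in>J. \<bar>c j\<bar> * p (f j))"
  using assms(2,3)
proof (induction J rule: finite_induct)
  case empty
  then show ?case using seminorm_on_zero[OF p fv_space_zero] by simp
next
  case (insert j J)
  have fj: "f j \<in> fv_space X" and rest: "(\<lambda>y. \<Sum>i\<in>J. c i * f i y) \<in> fv_space X"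
    using insert by (auto intro!: fv_space_sum fv_space_scale)
  have "p (\<lambda>y. \<Sum>i\<in>insert j J. c i * f i y) = p (\<lambda>y. c j * f j y + (\<Sum>i\<in>J. c i * f i y))"
    using insert by simp
  also have "\<dots> \<le> p (\<lambda>y. c j * f j y) + p (\<lambda>y. \<Sum>i\<in>J. c i * f i y)"
    using seminorm_on_triangle[OF p fv_space_scale[OF fj] rest] .
  also have "\<dots> = \<bar>c j\<bar> * p (f j) + p (\<lambda>y. \<Sum>i\<in>J. c i * f i y)"
    using seminorm_on_scale[OF p fj] by simp
  also have "\<dots> \<le> (\<Sum>i\<in>insert j J. \<bar>c i\<bar> * p (f i))"
    using insert by simp
  finally show ?case .
qed

lemma admissible_seminorm_imp_seminorm_on:
  "admissible_seminorm X p \<Longrightarrow> seminorm_on (fv_space X) p"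
  by (simp add: admissible_seminorm_def)

lemma admissible_seminorm_zero: "admissible_seminorm X (\<lambda>g. 0)"
  unfolding admissible_seminorm_def seminorm_on_def by auto

lemma admissible_seminorm_add:
  assumes "admissible_seminorm X p" "admissible_seminorm X q"
  shows "admissible_seminorm X (\<lambda>g. p g + q g)"
  unfolding admissible_seminorm_def
proof (intro conjI ballI allI impI)
  have p: "seminorm_on (fv_space X) p" and q: "seminorm_on (fv_space X) q"
    using assms by (simp_all add: admissible_seminorm_def)
  show "seminorm_on (fv_space X) (\<lambda>g. p g + q g)"
    unfolding seminorm_on_def
  proof (intro conjI ballI allI)
    fix f g assume "f \<in> fv_space X" "g \<in> fv_space X"
    then show "p (\<lambda>y. f y + g y) + q (\<lambda>y. f y + g y) \<le> p f + q f + (p g + q g)"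
      using seminorm_on_triangle[OF p] seminorm_on_triangle[OF q] by fastforce
  qed (use p q in \<open>auto simp: seminorm_on_def distrib_left\<close>)
  fix x and e :: real
  assume x: "x \<in> topspace X" and "e > 0"
  then have "e / 2 > 0" by simp
  then obtain U where U: "openin X U" "x \<in> U" "\<forall>y\<in>U. p (\<lambda>z. fv_delta y z - fv_delta x z) < e / 2"
    using assms(1) x unfolding admissible_seminorm_def by blast
  obtain V where V: "openin X V" "x \<in> V" "\<forall>y\<in>V. q (\<lambda>z. fv_delta y z - fv_delta x z) < e / 2"
    using assms(2) x \<open>e / 2 > 0\<close> unfolding admissible_seminorm_def by blast
  have "p (\<lambda>z. fv_delta y z - fv_delta x z) + q (\<lambda>z. fv_delta y z - fv_delta x z) < e"
    if "y \<in> U \<inter> V" for y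
  proof -
    have "p (\<lambda>z. fv_delta y z - fv_delta x z) < e / 2" "q (\<lambda>z. fv_delta y z - fv_delta x z) < e / 2"
      using that U(3) V(3) by auto
    then show ?thesis by linarith
  qed
  moreover have "openin X (U \<inter> V)" "x \<in> U \<inter> V"
    using U V by auto
  ultimately show "\<exists>W. openin X W \<and> x \<in> W \<and>
      (\<forall>y\<in>W. p (\<lambda>z. fv_delta y z - fv_delta x z) + q (\<lambda>z. fv_delta y z - fv_delta x z) < e)"
    by blast
qed

lemma continuous_map_euclideanreal_iff:
  "continuous_map X euclideanreal f \<longleftrightarrow>
   (\<forall>x\<in>topspace X. \<forall>e>0. \<exists>U. openin X U \<and> x \<in> U \<and> (\<forall>y\<in>U. \<bar>f y - f x\<bar> < e))"
  using Met_TC.continuous_map_to_metric[of X f] by (simp add: dist_real_def abs_minus_commute)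

abbreviation fv_ball :: "'a topology \<Rightarrow> (('a \<Rightarrow> real) \<Rightarrow> real) \<Rightarrow> ('a \<Rightarrow> real) \<Rightarrow> real \<Rightarrow> ('a \<Rightarrow> real) set"
  where "fv_ball X p f e \<equiv> {g \<in> fv_space X. p (\<lambda>y. g y - f y) < e}"

lemma istopology_free_lcs:
  "istopology (\<lambda>S. S \<subseteq> fv_space X \<and>
     (\<forall>f\<in>S. \<exists>p e. admissible_seminorm X p \<and> e > 0 \<and> fv_ball X p f e \<subseteq> S))"
  unfolding istopology_def
proof (rule conjI; intro allI impI)
  fix S T
  assume S: "S \<subseteq> fv_space X \<and> (\<forall>f\<in>S. \<exists>p e. admissible_seminorm X p \<and> e > 0 \<and> fv_ball X p f e \<subseteq> S)"
    and T: "T \<subseteq> fv_space X \<and> (\<forall>f\<in>T. \<exists>p e. admissible_seminorm X p \<and> e > 0 \<and> fv_ball X p f e \<subseteq> T)"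
  show "S \<inter> T \<subseteq> fv_space X \<and>
    (\<forall>f\<in>S \<inter> T. \<exists>p e. admissible_seminorm X p \<and> e > 0 \<and> fv_ball X p f e \<subseteq> S \<inter> T)"
  proof (intro conjI ballI)
    show "S \<inter> T \<subseteq> fv_space X" using S by blast
    fix f assume f: "f \<in> S \<inter> T"
    obtain p d where p: "admissible_seminorm X p" "d > 0" "fv_ball X p f d \<subseteq> S"
      using S f by blast
    obtain q e where q: "admissible_seminorm X q" "e > 0" "fv_ball X q f e \<subseteq> T"
      using T f by blast
    have "fv_ball X (\<lambda>g. p g + q g) f (min d e) \<subseteq> S \<inter> T"
    proof
      fix g assume g: "g \<in> fv_ball X (\<lambda>g. p g + q g) f (min d e)"
      then have "(\<lambda>y. g y - f y) \<in> fv_space X" using f S by (blast intro: fv_space_diff)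
      then have "0 \<le> p (\<lambda>y. g y - f y)" "0 \<le> q (\<lambda>y. g y - f y)"
        using p(1) q(1) seminorm_on_nonneg admissible_seminorm_imp_seminorm_on by blast+
      with g have "g \<in> fv_ball X p f d" "g \<in> fv_ball X q f e" by auto
      with p(3) q(3) show "g \<in> S \<inter> T" by blast
    qed
    moreover have "min d e > 0" using p(2) q(2) by simp
    ultimately show "\<exists>p e. admissible_seminorm X p \<and> e > 0 \<and> fv_ball X p f e \<subseteq> S \<inter> T"
      using admissible_seminorm_add[OF p(1) q(1)] by blast
  qed
next
  fix \<K> :: "('a \<Rightarrow> real) set set"
  assume "\<forall>S\<in>\<K>. S \<subseteq> fv_space X \<and> (\<forall>f\<in>S. \<exists>p e. admissible_seminorm X p \<and> e > 0 \<and> fv_ball X p f e \<subseteq> S)"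
  then show "\<Union>\<K> \<subseteq> fv_space X \<and>
    (\<forall>f\<in>\<Union>\<K>. \<exists>p e. admissible_seminorm X p \<and> e > 0 \<and> fv_ball X p f e \<subseteq> \<Union>\<K>)"
    by (meson UnionE Union_least Union_upper subset_trans)
qed

lemma openin_free_lcs:
  "openin (free_lcs X) S \<longleftrightarrow> S \<subseteq> fv_space X \<and>
     (\<forall>f\<in>S. \<exists>p e. admissible_seminorm X p \<and> e > 0 \<and> fv_ball X p f e \<subseteq> S)"
  unfolding free_lcs_def using istopology_free_lcs[of X] by simp

lemma topspace_free_lcs [simp]: "topspace (free_lcs X) = fv_space X"
proof -
  have "openin (free_lcs X) (fv_space X)"
    unfolding openin_free_lcs using admissible_seminorm_zero[of X] zero_less_one by blast
  then show ?thesis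
    using openin_free_lcs[of X "topspace (free_lcs X)"] openin_subset by blast
qed

lemma openin_free_lcs_ball:
  assumes p: "admissible_seminorm X p" and f: "f \<in> fv_space X"
  shows "openin (free_lcs X) (fv_ball X p f e)"
  unfolding openin_free_lcs
proof (intro conjI ballI)
  fix g assume g: "g \<in> fv_ball X p f e"
  have "fv_ball X p g (e - p (\<lambda>y. g y - f y)) \<subseteq> fv_ball X p f e"
  proof clarify
    fix h assume h: "h \<in> fv_space X" "p (\<lambda>y. h y - g y) < e - p (\<lambda>y. g y - f y)"
    have "p (\<lambda>y. (h y - g y) + (g y - f y)) \<le> p (\<lambda>y. h y - g y) + p (\<lambda>y. g y - f y)"
      using g f h(1) fv_space_diff
      by (intro seminorm_on_triangle[OF admissible_seminorm_imp_seminorm_on[OF p]]) auto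
    with h(2) show "p (\<lambda>y. h y - f y) < e" by simp
  qed
  moreover have "e - p (\<lambda>y. g y - f y) > 0" using g by simp
  ultimately show "\<exists>q d. admissible_seminorm X q \<and> d > 0 \<and> fv_ball X q g d \<subseteq> fv_ball X p f e"
    using p by blast
qed auto

lemma openin_free_lcs_obtain_ball:
  assumes "openin (free_lcs X) U" "f \<in> U"
  obtains p e where "admissible_seminorm X p" "e > 0" "fv_ball X p f e \<subseteq> U"
  using assms unfolding openin_free_lcs by blast

lemma continuous_map_admissible_seminorm:
  assumes p: "admissible_seminorm X p"
  shows "continuous_map (free_lcs X) euclideanreal p"
  unfolding continuous_map_euclideanreal_iff
proof (intro ballI allI impI)
  fix f and e :: real
  assume f: "f \<in> topspace (free_lcs X)" and "e > 0"
  have sp: "seminorm_on (fv_space X) p"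
    using p by (rule admissible_seminorm_imp_seminorm_on)
  have "\<bar>p g - p f\<bar> < e" if "g \<in> fv_ball X p f e" for g
    using that f seminorm_on_abs_diff_le[OF sp, of g f] by simp
  moreover have "f \<in> fv_ball X p f e"
    using f \<open>e > 0\<close> seminorm_on_zero[OF sp, of f] by simp
  moreover have "openin (free_lcs X) (fv_ball X p f e)"
    using openin_free_lcs_ball[OF p] f by simp
  ultimately show "\<exists>U. openin (free_lcs X) U \<and> f \<in> U \<and> (\<forall>g\<in>U. \<bar>p g - p f\<bar> < e)"
    by blast
qed

lemma continuous_map_admissible_seminorm_delta:
  assumes p: "admissible_seminorm X p"
  shows "continuous_map X euclideanreal (\<lambda>x. p (fv_delta x))"
  unfolding continuous_map_euclideanreal_iff
proof (intro ballI allI impI)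
  fix x and e :: real
  assume x: "x \<in> topspace X" and "e > 0"
  then obtain U where U: "openin X U" "x \<in> U" "\<forall>y\<in>U. p (\<lambda>z. fv_delta y z - fv_delta x z) < e"
    using p unfolding admissible_seminorm_def by blast
  have "\<bar>p (fv_delta y) - p (fv_delta x)\<bar> < e" if "y \<in> U" for y
  proof -
    have "y \<in> topspace X" using that openin_subset[OF U(1)] by blast
    then have "\<bar>p (fv_delta y) - p (fv_delta x)\<bar> \<le> p (\<lambda>z. fv_delta y z - fv_delta x z)"
      using x admissible_seminorm_imp_seminorm_on[OF p]
      by (intro seminorm_on_abs_diff_le fv_delta_in_fv_space)
    with U(3) that show ?thesis by fastforce
  qed
  then show "\<exists>U. openin X U \<and> x \<in> U \<and> (\<forall>y\<in>U. \<bar>p (fv_delta y) - p (fv_delta x)\<bar> < e)"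
    using U by auto
qed

lemma continuous_map_into_free_lcs:
  assumes "\<And>y. y \<in> topspace Y \<Longrightarrow> h y \<in> fv_space X"
    and "\<And>p y e. admissible_seminorm X p \<Longrightarrow> y \<in> topspace Y \<Longrightarrow> e > 0 \<Longrightarrow>
           \<exists>W. openin Y W \<and> y \<in> W \<and> (\<forall>z\<in>W. p (\<lambda>t. h z t - h y t) < e)"
  shows "continuous_map Y (free_lcs X) h"
  unfolding continuous_map_def
proof (intro conjI allI impI)
  show "h \<in> topspace Y \<rightarrow> topspace (free_lcs X)" using assms(1) by auto
  fix U assume U: "openin (free_lcs X) U"
  show "openin Y {y \<in> topspace Y. h y \<in> U}"
  proof (subst openin_subopen, intro ballI)
    fix y assume y: "y \<in> {y \<in> topspace Y. h y \<in> U}"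
    then obtain p e where p: "admissible_seminorm X p" "e > 0" "fv_ball X p (h y) e \<subseteq> U"
      using openin_free_lcs_obtain_ball[OF U] by blast
    obtain W where W: "openin Y W" "y \<in> W" "\<forall>z\<in>W. p (\<lambda>t. h z t - h y t) < e"
      using assms(2)[OF p(1) _ p(2)] y by blast
    have "W \<subseteq> {y \<in> topspace Y. h y \<in> U}"
    proof
      fix z assume "z \<in> W"
      then have "z \<in> topspace Y" "h z \<in> fv_ball X p (h y) e"
        using W assms(1) openin_subset[OF W(1)] by auto
      with p(3) show "z \<in> {y \<in> topspace Y. h y \<in> U}" by blast
    qed
    with W show "\<exists>T. openin Y T \<and> y \<in> T \<and> T \<subseteq> {y \<in> topspace Y. h y \<in> U}" by blast
  qed
qed

section \<open>Bounded sets and pairings with continuous functions\<close>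

lemma tvs_bounded_free_lcs_iff:
  assumes B: "B \<subseteq> fv_space X"
  shows "tvs_bounded (free_lcs X) B \<longleftrightarrow> (\<forall>p. admissible_seminorm X p \<longrightarrow> bdd_above (p ` B))"
proof (intro iffI allI impI)
  fix p assume bdd: "tvs_bounded (free_lcs X) B" and p: "admissible_seminorm X p"
  have sp: "seminorm_on (fv_space X) p"
    using p by (rule admissible_seminorm_imp_seminorm_on)
  have "openin (free_lcs X) (fv_ball X p (\<lambda>y. 0) 1)" "(\<lambda>y. 0) \<in> fv_ball X p (\<lambda>y. 0) 1"
    using openin_free_lcs_ball[OF p fv_space_zero] seminorm_on_zero[OF sp fv_space_zero] by simp_all
  then obtain n :: nat where n: "B \<subseteq> (\<lambda>f. (\<lambda>y. real n * f y)) ` fv_ball X p (\<lambda>y. 0) 1"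
    using bdd unfolding tvs_bounded_def by blast
  have "p b \<le> real n" if "b \<in> B" for b
  proof -
    have "b \<in> (\<lambda>f. (\<lambda>y. real n * f y)) ` fv_ball X p (\<lambda>y. 0) 1"
      using n that by (rule subsetD)
    then obtain u where u: "u \<in> fv_ball X p (\<lambda>y. 0) 1" "b = (\<lambda>y. real n * u y)"
      by (rule imageE) simp
    then have u: "u \<in> fv_space X" "p u < 1" "b = (\<lambda>y. real n * u y)"
      by simp_all
    then have "p b = real n * p u"
      using seminorm_on_scale[OF sp u(1)] by simp
    also have "\<dots> \<le> real n"
      using u(2) by (simp add: mult_left_le)
    finally show ?thesis .
  qed
  then show "bdd_above (p ` B)" by (rule bdd_aboveI2)
next
  assume H: "\<forall>p. admissible_seminorm X p \<longrightarrow> bdd_above (p ` B)"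
  show "tvs_bounded (free_lcs X) B"
    unfolding tvs_bounded_def
  proof (intro allI impI)
    fix U assume U: "openin (free_lcs X) U \<and> (\<lambda>y. 0) \<in> U"
    obtain p e where p: "admissible_seminorm X p" "e > 0" "fv_ball X p (\<lambda>y. 0) e \<subseteq> U"
      using openin_free_lcs_obtain_ball[of X U "\<lambda>y. 0"] U by blast
    have sp: "seminorm_on (fv_space X) p"
      using p(1) by (rule admissible_seminorm_imp_seminorm_on)
    obtain M where M: "\<And>b. b \<in> B \<Longrightarrow> p b \<le> M"
      using H p(1) by (meson bdd_above.E imageI)
    obtain n :: nat where n: "max M 1 / e < real n"
      using reals_Archimedean2 by blast
    have npos: "real n > 0"
      using n p(2) by (smt (verit) divide_pos_pos)
    have "b \<in> (\<lambda>f. (\<lambda>y. real n * f y)) ` U" if b: "b \<in> B" for b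
    proof -
      have bV: "b \<in> fv_space X" using b B by blast
      have "p (\<lambda>y. (1 / real n) * b y) = \<bar>1 / real n\<bar> * p b"
        by (rule seminorm_on_scale[OF sp bV])
      also have "\<dots> = p b / real n"
        using npos by simp
      also have "\<dots> \<le> max M 1 / real n"
        using M[OF b] npos by (simp add: divide_right_mono)
      also have "\<dots> < e"
        using n npos p(2) by (simp add: divide_less_eq mult.commute)
      finally have "(\<lambda>y. (1 / real n) * b y) \<in> fv_ball X p (\<lambda>y. 0) e"
        using fv_space_scale[OF bV, of "1 / real n"] by simp
      then have "(\<lambda>y. (1 / real n) * b y) \<in> U"
        by (rule subsetD[OF p(3)])
      then show ?thesis
        by (rule image_eqI[rotated]) (use npos in simp)
    qed
    then show "\<exists>n::nat. B \<subseteq> (\<lambda>f. (\<lambda>y. real n * f y)) ` U" by blast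
  qed
qed

lemma compactin_imp_tvs_bounded:
  assumes "compactin (free_lcs X) K"
  shows "tvs_bounded (free_lcs X) K"
proof -
  have "bdd_above (p ` K)" if "admissible_seminorm X p" for p
  proof -
    have "compact (p ` K)"
      using image_compactin[OF assms continuous_map_admissible_seminorm[OF that]]
      by (simp add: compactin_euclidean_iff)
    then show ?thesis
      by (simp add: bounded_imp_bdd_above compact_imp_bounded)
  qed
  then show ?thesis
    using compactin_subset_topspace[OF assms] by (simp add: tvs_bounded_free_lcs_iff)
qed

lemma functionally_bounded_imp_bdd_above:
  "functionally_bounded X A \<Longrightarrow> continuous_map X euclideanreal f \<Longrightarrow> bdd_above (f ` A)"
  by (simp add: functionally_bounded_def bounded_imp_bdd_above)

definition fv_pair :: "('a \<Rightarrow> real) \<Rightarrow> ('a \<Rightarrow> real) \<Rightarrow> real" where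
  "fv_pair g \<phi> = (\<Sum>x | g x \<noteq> 0. g x * \<phi> x)"

lemma fv_pair_eq_sum:
  assumes "finite T" "{x. g x \<noteq> 0} \<subseteq> T"
  shows "fv_pair g \<phi> = (\<Sum>x\<in>T. g x * \<phi> x)"
  unfolding fv_pair_def by (rule sum.mono_neutral_left) (use assms in auto)

lemma fv_pair_add:
  assumes "g \<in> fv_space X" "h \<in> fv_space X"
  shows "fv_pair (\<lambda>y. g y + h y) \<phi> = fv_pair g \<phi> + fv_pair h \<phi>"
proof -
  let ?T = "{x. g x \<noteq> 0} \<union> {x. h x \<noteq> 0}"
  have T: "finite ?T" using assms by (simp add: fv_space_def)
  have "fv_pair (\<lambda>y. g y + h y) \<phi> = (\<Sum>x\<in>?T. g x * \<phi> x + h x * \<phi> x)"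
    by (subst fv_pair_eq_sum[OF T]) (auto simp: distrib_right)
  also have "\<dots> = fv_pair g \<phi> + fv_pair h \<phi>"
    by (simp add: sum.distrib fv_pair_eq_sum[OF T])
  finally show ?thesis .
qed

lemma fv_pair_scale: "fv_pair (\<lambda>y. c * g y) \<phi> = c * fv_pair g \<phi>"
proof (cases "c = 0")
  case False
  then have "{x. c * g x \<noteq> 0} = {x. g x \<noteq> 0}" by auto
  then show ?thesis by (simp add: fv_pair_def sum_distrib_left mult.assoc)
qed (simp add: fv_pair_def)

lemma fv_pair_diff:
  assumes "g \<in> fv_space X" "h \<in> fv_space X"
  shows "fv_pair (\<lambda>y. g y - h y) \<phi> = fv_pair g \<phi> - fv_pair h \<phi>"
  using fv_pair_add[OF assms(1) fv_space_scale[OF assms(2), of "-1"], of \<phi>] fv_pair_scale[of "-1" h \<phi>]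
  by simp

lemma fv_pair_eq_single:
  assumes "finite {y. h y \<noteq> 0}" "\<And>y. h y \<noteq> 0 \<Longrightarrow> y \<noteq> x \<Longrightarrow> \<phi> y = 0"
  shows "fv_pair h \<phi> = h x * \<phi> x"
proof -
  have "fv_pair h \<phi> = (\<Sum>y\<in>insert x {y. h y \<noteq> 0}. h y * \<phi> y)"
    using assms(1) by (intro fv_pair_eq_sum) auto
  also have "\<dots> = (\<Sum>y\<in>insert x {y. h y \<noteq> 0}. if y = x then h x * \<phi> x else 0)"
    using assms(2) by (intro sum.cong) auto
  also have "\<dots> = h x * \<phi> x"
    using assms(1) by simp
  finally show ?thesis .
qed

lemma fv_pair_delta_diff: "fv_pair (\<lambda>z. fv_delta y z - fv_delta x z) \<phi> = \<phi> y - \<phi> x"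
proof -
  have "fv_pair (\<lambda>z. fv_delta y z - fv_delta x z) \<phi> = (\<Sum>z\<in>{x, y}. (fv_delta y z - fv_delta x z) * \<phi> z)"
    by (rule fv_pair_eq_sum) (auto simp: fv_delta_def)
  then show ?thesis
    by (cases "x = y") (auto simp: fv_delta_def)
qed

lemma admissible_seminorm_abs_fv_pair:
  assumes "continuous_map X euclideanreal \<phi>"
  shows "admissible_seminorm X (\<lambda>g. \<bar>fv_pair g \<phi>\<bar>)"
  unfolding admissible_seminorm_def
proof (intro conjI)
  show "seminorm_on (fv_space X) (\<lambda>g. \<bar>fv_pair g \<phi>\<bar>)"
    unfolding seminorm_on_def by (simp add: fv_pair_add fv_pair_scale abs_mult abs_triangle_ineq)
  show "\<forall>x\<in>topspace X. \<forall>e>0. \<exists>U. openin X U \<and> x \<in> U \<and>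
          (\<forall>y\<in>U. \<bar>fv_pair (\<lambda>z. fv_delta y z - fv_delta x z) \<phi>\<bar> < e)"
    using assms unfolding continuous_map_euclideanreal_iff fv_pair_delta_diff .
qed

lemma continuous_map_fv_pair:
  assumes "continuous_map X euclideanreal \<phi>"
  shows "continuous_map (free_lcs X) euclideanreal (\<lambda>g. fv_pair g \<phi>)"
  unfolding continuous_map_euclideanreal_iff
proof (intro ballI allI impI)
  fix f and e :: real
  assume f: "f \<in> topspace (free_lcs X)" and "e > 0"
  have "openin (free_lcs X) (fv_ball X (\<lambda>g. \<bar>fv_pair g \<phi>\<bar>) f e)"
    using openin_free_lcs_ball[OF admissible_seminorm_abs_fv_pair[OF assms]] f by simp
  moreover have "f \<in> fv_ball X (\<lambda>g. \<bar>fv_pair g \<phi>\<bar>) f e"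
    using f \<open>e > 0\<close> by (simp add: fv_pair_def)
  moreover have "\<bar>fv_pair g \<phi> - fv_pair f \<phi>\<bar> < e" if "g \<in> fv_ball X (\<lambda>g. \<bar>fv_pair g \<phi>\<bar>) f e" for g
    using that f fv_pair_diff[of g X f \<phi>] by simp
  ultimately show "\<exists>U. openin (free_lcs X) U \<and> f \<in> U \<and> (\<forall>g\<in>U. \<bar>fv_pair g \<phi> - fv_pair f \<phi>\<bar> < e)"
    by blast
qed

lemma completely_regular_separating_function:
  assumes "completely_regular_space X" "Hausdorff_space X"
    and "finite F" "F \<subseteq> topspace X" "x \<in> topspace X" "x \<notin> F"
  obtains \<phi> where "continuous_map X euclideanreal \<phi>" "\<phi> x = 1" "\<And>y. y \<in> F \<Longrightarrow> \<phi> y = 0"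
proof -
  have "closedin X F"
    using closedin_Hausdorff_finite[OF assms(2,4,3)] .
  moreover have "x \<in> topspace X - F"
    using assms(5,6) by blast
  ultimately obtain f where f: "continuous_map X (top_of_set {0..1::real}) f" "f x = 0" "f ` F \<subseteq> {1}"
    using assms(1) unfolding completely_regular_space_def by meson
  then have "continuous_map X euclideanreal (\<lambda>y. 1 - f y)"
    by (auto simp: continuous_map_in_subtopology intro: continuous_intros)
  with f show ?thesis
    by (intro that[of "\<lambda>y. 1 - f y"]) auto
qed

lemma lin_indep_image_fv_delta: "lin_indep (fv_delta ` A)"
  unfolding lin_indep_def
proof (intro allI impI ballI)
  fix S c s
  assume S: "finite S \<and> S \<subseteq> fv_delta ` A \<and> (\<lambda>y. \<Sum>s\<in>S. c s * s y) = (\<lambda>y. 0)" and "s \<in> S"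
  then obtain a where a: "s = fv_delta a" by blast
  have "0 = (\<Sum>t\<in>S. c t * t a)"
    using fun_cong[OF conjunct2[OF conjunct2[OF S]], of a] by simp
  also have "\<dots> = (\<Sum>t\<in>S. if t = s then c t else 0)"
  proof (rule sum.cong)
    fix t assume "t \<in> S"
    then obtain b where b: "t = fv_delta b" using S by blast
    show "c t * t a = (if t = s then c t else 0)"
      unfolding b a inj_eq[OF fv_delta_inj] by (simp add: fv_delta_def)
  qed simp
  also have "\<dots> = c s"
    using S \<open>s \<in> S\<close> by simp
  finally show "c s = 0" by simp
qed

lemma tvs_bounded_image_fv_delta:
  assumes "functionally_bounded X A"
  shows "tvs_bounded (free_lcs X) (fv_delta ` A)"
proof -
  have A: "A \<subseteq> topspace X" using assms by (simp add: functionally_bounded_def)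
  have "bdd_above (p ` fv_delta ` A)" if "admissible_seminorm X p" for p
    using functionally_bounded_imp_bdd_above[OF assms continuous_map_admissible_seminorm_delta[OF that]]
    by (simp add: image_image)
  moreover have "fv_delta ` A \<subseteq> fv_space X"
    using A by (auto intro: fv_delta_in_fv_space)
  ultimately show ?thesis
    by (simp add: tvs_bounded_free_lcs_iff)
qed

lemma finite_functionally_bounded_if_finite_bounded_lin_indep:
  assumes "\<forall>B. B \<subseteq> topspace (free_lcs X) \<and> tvs_bounded (free_lcs X) B \<and> lin_indep B \<longrightarrow> finite B"
    and "functionally_bounded X A"
  shows "finite A"
proof -
  have "fv_delta ` A \<subseteq> topspace (free_lcs X)"
    using assms(2) by (auto simp: functionally_bounded_def intro: fv_delta_in_fv_space)
  then have "finite (fv_delta ` A)"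
    using assms(1) tvs_bounded_image_fv_delta[OF assms(2)] lin_indep_image_fv_delta[of A] by simp
  then show ?thesis
    using finite_imageD inj_on_subset[OF fv_delta_inj subset_UNIV] by blast
qed

section \<open>Supports of bounded sets\<close>

(* Summing only over the k whose cozero set meets the support of h keeps the sum finite
   when the cozero sets are locally finite. *)
definition sum_abs_fv_pair :: "('i \<Rightarrow> 'a \<Rightarrow> real) \<Rightarrow> ('a \<Rightarrow> real) \<Rightarrow> real" where
  "sum_abs_fv_pair \<phi> h = (\<Sum>k | \<exists>y. h y \<noteq> 0 \<and> \<phi> k y \<noteq> 0. \<bar>fv_pair h (\<phi> k)\<bar>)"

lemma sum_abs_fv_pair_eq_sum:
  assumes "finite T" "{k. \<exists>y. h y \<noteq> 0 \<and> \<phi> k y \<noteq> 0} \<subseteq> T"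
  shows "sum_abs_fv_pair \<phi> h = (\<Sum>k\<in>T. \<bar>fv_pair h (\<phi> k)\<bar>)"
  unfolding sum_abs_fv_pair_def
  by (rule sum.mono_neutral_left) (use assms in \<open>auto simp: fv_pair_def intro!: sum.neutral\<close>)

locale locally_finite_cozero_family =
  fixes X :: "'a topology" and \<phi> :: "'i \<Rightarrow> 'a \<Rightarrow> real"
  assumes continuous: "\<And>k. continuous_map X euclideanreal (\<phi> k)"
    and locally_finite: "\<And>x. x \<in> topspace X \<Longrightarrow>
      \<exists>U. openin X U \<and> x \<in> U \<and> finite {k. \<exists>y\<in>U. \<phi> k y \<noteq> 0}"
begin

lemma finite_indices:
  assumes "h \<in> fv_space X"
  shows "finite {k. \<exists>y. h y \<noteq> 0 \<and> \<phi> k y \<noteq> 0}"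
proof -
  have "finite {k. \<phi> k y \<noteq> 0}" if "y \<in> topspace X" for y
    using locally_finite[OF that] by (auto elim: rev_finite_subset)
  moreover have "{k. \<exists>y. h y \<noteq> 0 \<and> \<phi> k y \<noteq> 0} = (\<Union>y\<in>{y. h y \<noteq> 0}. {k. \<phi> k y \<noteq> 0})"
    by blast
  ultimately show ?thesis
    using assms by (auto simp: fv_space_def)
qed

lemma abs_fv_pair_le:
  assumes "h \<in> fv_space X"
  shows "\<bar>fv_pair h (\<phi> k)\<bar> \<le> sum_abs_fv_pair \<phi> h"
proof (cases "\<exists>y. h y \<noteq> 0 \<and> \<phi> k y \<noteq> 0")
  case True
  then show ?thesis
    unfolding sum_abs_fv_pair_def using finite_indices[OF assms] by (intro member_le_sum) auto
next
  case False
  then have "fv_pair h (\<phi> k) = 0"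
    unfolding fv_pair_def by (intro sum.neutral) auto
  then show ?thesis
    by (simp add: sum_abs_fv_pair_def sum_nonneg)
qed

lemma seminorm: "seminorm_on (fv_space X) (sum_abs_fv_pair \<phi>)"
  unfolding seminorm_on_def
proof (intro conjI ballI allI)
  fix f assume "f \<in> fv_space X"
  then show "0 \<le> sum_abs_fv_pair \<phi> f"
    by (simp add: sum_abs_fv_pair_def sum_nonneg)
next
  fix f c assume "f \<in> fv_space X"
  then show "sum_abs_fv_pair \<phi> (\<lambda>y. c * f y) = \<bar>c\<bar> * sum_abs_fv_pair \<phi> f"
    using finite_indices
    by (subst (1 2) sum_abs_fv_pair_eq_sum[of "{k. \<exists>y. f y \<noteq> 0 \<and> \<phi> k y \<noteq> 0}"])
      (auto simp: fv_pair_scale abs_mult sum_distrib_left)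
next
  fix f g assume f: "f \<in> fv_space X" and g: "g \<in> fv_space X"
  let ?T = "{k. \<exists>y. f y \<noteq> 0 \<and> \<phi> k y \<noteq> 0} \<union> {k. \<exists>y. g y \<noteq> 0 \<and> \<phi> k y \<noteq> 0}"
  have T: "finite ?T"
    using finite_indices[OF f] finite_indices[OF g] by simp
  have "{k. \<exists>y. f y + g y \<noteq> 0 \<and> \<phi> k y \<noteq> 0} \<subseteq> ?T"
  proof
    fix k assume "k \<in> {k. \<exists>y. f y + g y \<noteq> 0 \<and> \<phi> k y \<noteq> 0}"
    then obtain y where "f y + g y \<noteq> 0" "\<phi> k y \<noteq> 0" by blast
    then show "k \<in> ?T" by (cases "f y = 0") auto
  qed
  then have "sum_abs_fv_pair \<phi> (\<lambda>y. f y + g y) = (\<Sum>k\<in>?T. \<bar>fv_pair f (\<phi> k) + fv_pair g (\<phi> k)\<bar>)"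
    using fv_pair_add[OF f g] by (simp add: sum_abs_fv_pair_eq_sum[OF T])
  also have "\<dots> \<le> (\<Sum>k\<in>?T. \<bar>fv_pair f (\<phi> k)\<bar> + \<bar>fv_pair g (\<phi> k)\<bar>)"
    by (intro sum_mono abs_triangle_ineq)
  also have "\<dots> = sum_abs_fv_pair \<phi> f + sum_abs_fv_pair \<phi> g"
    by (simp add: sum.distrib sum_abs_fv_pair_eq_sum[OF T])
  finally show "sum_abs_fv_pair \<phi> (\<lambda>y. f y + g y) \<le> sum_abs_fv_pair \<phi> f + sum_abs_fv_pair \<phi> g" .
qed

lemma admissible: "admissible_seminorm X (sum_abs_fv_pair \<phi>)"
  unfolding admissible_seminorm_def
proof (intro conjI seminorm ballI allI impI)
  fix x and e :: real
  assume x: "x \<in> topspace X" and "e > 0"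
  obtain U where U: "openin X U" "x \<in> U" "finite {k. \<exists>y\<in>U. \<phi> k y \<noteq> 0}"
    using locally_finite[OF x] by blast
  define T where "T = {k. \<exists>y\<in>U. \<phi> k y \<noteq> 0}"
  have T: "finite T" using U(3) by (simp add: T_def)
  have eq: "sum_abs_fv_pair \<phi> (\<lambda>z. fv_delta y z - fv_delta x z) = (\<Sum>k\<in>T. \<bar>\<phi> k y - \<phi> k x\<bar>)"
    if "y \<in> U" for y
  proof -
    have "{k. \<exists>z. fv_delta y z - fv_delta x z \<noteq> 0 \<and> \<phi> k z \<noteq> 0} \<subseteq> T"
      using that U(2) by (auto simp: T_def fv_delta_def split: if_splits)
    then show ?thesis
      using T by (simp add: sum_abs_fv_pair_eq_sum fv_pair_delta_diff)
  qed
  have "continuous_map X euclideanreal (\<lambda>y. \<Sum>k\<in>T. \<bar>\<phi> k y - \<phi> k x\<bar>)"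
    using T by (intro continuous_map_sum continuous_intros continuous) auto
  then have "openin X {y \<in> topspace X. (\<Sum>k\<in>T. \<bar>\<phi> k y - \<phi> k x\<bar>) \<in> {..<e}}"
    by (rule openin_continuous_map_preimage) simp
  moreover have "x \<in> {y \<in> topspace X. (\<Sum>k\<in>T. \<bar>\<phi> k y - \<phi> k x\<bar>) \<in> {..<e}}"
    using x \<open>e > 0\<close> by simp
  ultimately show "\<exists>W. openin X W \<and> x \<in> W \<and>
      (\<forall>y\<in>W. sum_abs_fv_pair \<phi> (\<lambda>z. fv_delta y z - fv_delta x z) < e)"
    using U eq by (intro exI[of _ "U \<inter> {y \<in> topspace X. (\<Sum>k\<in>T. \<bar>\<phi> k y - \<phi> k x\<bar>) \<in> {..<e}}"]) auto
qed

end

lemma unbounded_imp_increasing_sequence: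
  fixes g :: "'a \<Rightarrow> real"
  assumes "\<not> bdd_above (g ` S)" "d \<ge> 0"
  shows "\<exists>xs :: nat \<Rightarrow> 'a. (\<forall>k. xs k \<in> S) \<and> (\<forall>i j. i < j \<longrightarrow> g (xs i) + d \<le> g (xs j))"
proof -
  have "\<exists>y. y \<in> S \<and> g x + d < g y" for x
  proof (rule ccontr)
    assume "\<not> (\<exists>y. y \<in> S \<and> g x + d < g y)"
    then have "bdd_above (g ` S)"
      by (intro bdd_aboveI2[of _ _ "g x + d"]) (simp add: not_less)
    with assms(1) show False ..
  qed
  then obtain nxt where nxt: "\<forall>x. nxt x \<in> S \<and> g x + d < g (nxt x)"
    using choice[of "\<lambda>x y. y \<in> S \<and> g x + d < g y"] by blast
  define xs where "xs k = (nxt ^^ Suc k) undefined" for k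
  have xs: "xs k \<in> S" "g (xs k) + d < g (xs (Suc k))" for k
    using nxt by (simp_all add: xs_def)
  have "incseq (\<lambda>k. g (xs k) - d * real k)"
    using xs(2) by (intro incseq_SucI) (simp add: algebra_simps less_imp_le)
  then have step: "g (xs i) + d * (real j - real i) \<le> g (xs j)" if "i \<le> j" for i j
    using incseqD[OF _ that, of "\<lambda>k. g (xs k) - d * real k"] by (simp add: algebra_simps)
  have "g (xs i) + d \<le> g (xs j)" if "i < j" for i j
  proof -
    have "d \<le> d * (real j - real i)"
      using that assms(2) by (simp add: mult_le_cancel_left1)
    then show ?thesis
      using step[of i j] that by linarith
  qed
  with xs(1) show ?thesis by blast
qed

lemma subsingleton_finite:
  assumes "\<And>i j. i \<in> A \<Longrightarrow> j \<in> A \<Longrightarrow> i = j"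
  shows "finite A"
proof (cases "A = {}")
  case False
  then obtain i where "i \<in> A" by blast
  with assms have "A \<subseteq> {i}" by blast
  then show ?thesis by (rule finite_subset) simp
qed simp

lemma locally_finite_level_bands:
  assumes g: "continuous_map X euclideanreal g" and x: "x \<in> topspace X"
    and sep: "\<And>i j. i \<noteq> j \<Longrightarrow> 3 \<le> \<bar>t i - t j\<bar>"
  shows "\<exists>U. openin X U \<and> x \<in> U \<and> finite {k. \<exists>y\<in>U. \<bar>g y - t k\<bar> < 1}"
proof (intro exI conjI)
  let ?U = "{y \<in> topspace X. g y \<in> ball (g x) (1/2)}"
  show "openin X ?U"
    using g by (rule openin_continuous_map_preimage) simp
  show "x \<in> ?U" using x by simp
  have "i = j" if i: "i \<in> {k. \<exists>y\<in>?U. \<bar>g y - t k\<bar> < 1}"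
    and j: "j \<in> {k. \<exists>y\<in>?U. \<bar>g y - t k\<bar> < 1}" for i j
  proof -
    obtain y z where "\<bar>g x - g y\<bar> < 1/2" "\<bar>g y - t i\<bar> < 1" "\<bar>g x - g z\<bar> < 1/2" "\<bar>g z - t j\<bar> < 1"
      using i j unfolding mem_Collect_eq mem_ball dist_real_def by blast
    then have "\<bar>t i - t j\<bar> < 3"
      unfolding abs_less_iff by linarith
    then show "i = j" using sep[of i j] by linarith
  qed
  then show "finite {k. \<exists>y\<in>?U. \<bar>g y - t k\<bar> < 1}"
    by (rule subsingleton_finite)
qed

lemma functionally_bounded_support:
  assumes cr: "completely_regular_space X" and hd: "Hausdorff_space X"
    and B: "B \<subseteq> fv_space X" and bdd: "tvs_bounded (free_lcs X) B"
  shows "functionally_bounded X (\<Union>b\<in>B. {x. b x \<noteq> 0})"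
proof (rule ccontr)
  define S where "S = (\<Union>b\<in>B. {x. b x \<noteq> 0})"
  have S: "S \<subseteq> topspace X"
    using B by (auto simp: S_def fv_space_def)
  assume "\<not> functionally_bounded X (\<Union>b\<in>B. {x. b x \<noteq> 0})"
  then obtain f where f: "continuous_map X euclideanreal f" "\<not> bounded (f ` S)"
    using S unfolding functionally_bounded_def S_def by blast
  define g where "g x = \<bar>f x\<bar>" for x
  have g: "continuous_map X euclideanreal g"
    unfolding g_def using f(1) by (intro continuous_intros)
  have "\<not> bdd_above (g ` S)"
  proof
    assume "bdd_above (g ` S)"
    then obtain M where "\<And>x. x \<in> S \<Longrightarrow> \<bar>f x\<bar> \<le> M"
      by (auto simp: g_def bdd_above_def)
    then have "bounded (f ` S)"
      unfolding bounded_iff by auto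
    with f(2) show False ..
  qed
  then obtain xs :: "nat \<Rightarrow> 'a" where xs: "\<forall>k. xs k \<in> S" "\<forall>i j. i < j \<longrightarrow> g (xs i) + 3 \<le> g (xs j)"
    using unbounded_imp_increasing_sequence[of g S 3] by auto
  then have xs: "\<And>k. xs k \<in> S" "\<And>i j. i < j \<Longrightarrow> g (xs i) + 3 \<le> g (xs j)"
    by simp_all
  have sep: "3 \<le> \<bar>g (xs i) - g (xs j)\<bar>" if "i \<noteq> j" for i j
    using xs(2)[of i j] xs(2)[of j i] that by (cases "i < j") (auto simp: abs_if)
  have "\<forall>k. \<exists>b. b \<in> B \<and> b (xs k) \<noteq> 0"
    using xs(1) by (auto simp: S_def)
  from choice[OF this] obtain bs where bs: "\<And>k. bs k \<in> B" "\<And>k. bs k (xs k) \<noteq> 0"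
    by blast
  have bsV: "bs k \<in> fv_space X" for k
    using bs(1) B by blast
  have "\<forall>k. \<exists>\<psi>. continuous_map X euclideanreal \<psi> \<and> \<psi> (xs k) = 1 \<and>
          (\<forall>y. bs k y \<noteq> 0 \<longrightarrow> y \<noteq> xs k \<longrightarrow> \<psi> y = 0)"
  proof
    fix k
    have F: "finite ({y. bs k y \<noteq> 0} - {xs k})" "{y. bs k y \<noteq> 0} - {xs k} \<subseteq> topspace X"
      using bsV[of k] by (auto simp: fv_space_def)
    have "xs k \<in> topspace X"
      using xs(1) S by blast
    then obtain \<psi> where "continuous_map X euclideanreal \<psi>" "\<psi> (xs k) = 1"
      "\<And>y. y \<in> {y. bs k y \<noteq> 0} - {xs k} \<Longrightarrow> \<psi> y = 0"
      using completely_regular_separating_function[OF cr hd F] by blast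
    then show "\<exists>\<psi>. continuous_map X euclideanreal \<psi> \<and> \<psi> (xs k) = 1 \<and>
          (\<forall>y. bs k y \<noteq> 0 \<longrightarrow> y \<noteq> xs k \<longrightarrow> \<psi> y = 0)"
      by blast
  qed
  from choice[OF this] obtain \<psi> where \<psi>: "\<And>k. continuous_map X euclideanreal (\<psi> k)"
    "\<And>k. \<psi> k (xs k) = 1" "\<And>k y. bs k y \<noteq> 0 \<Longrightarrow> y \<noteq> xs k \<Longrightarrow> \<psi> k y = 0"
    by blast
  \<comment> \<open>Bumps at the points xs k, scaled so that the pairing with bs k has absolute value k;
    their cozero sets lie in the bands where g is within 1 of g (xs k), which are locally finite.\<close>
  define \<phi> where "\<phi> k y = real k / \<bar>bs k (xs k)\<bar> * \<psi> k y * max 0 (1 - \<bar>g y - g (xs k)\<bar>)" for k y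
  interpret locally_finite_cozero_family X \<phi>
  proof
    show "continuous_map X euclideanreal (\<phi> k)" for k
      unfolding \<phi>_def using \<psi>(1) g by (intro continuous_intros) auto
    fix x assume x: "x \<in> topspace X"
    have "\<exists>U. openin X U \<and> x \<in> U \<and> finite {k. \<exists>y\<in>U. \<bar>g y - g (xs k)\<bar> < 1}"
      by (rule locally_finite_level_bands[OF g x]) (rule sep)
    then obtain U where U: "openin X U" "x \<in> U" "finite {k. \<exists>y\<in>U. \<bar>g y - g (xs k)\<bar> < 1}"
      by blast
    have "\<bar>g y - g (xs k)\<bar> < 1" if "\<phi> k y \<noteq> 0" for k y
      using that by (auto simp: \<phi>_def max_def split: if_splits)
    then have "{k. \<exists>y\<in>U. \<phi> k y \<noteq> 0} \<subseteq> {k. \<exists>y\<in>U. \<bar>g y - g (xs k)\<bar> < 1}"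
      by blast
    then have "finite {k. \<exists>y\<in>U. \<phi> k y \<noteq> 0}"
      using U(3) by (rule finite_subset)
    with U show "\<exists>U. openin X U \<and> x \<in> U \<and> finite {k. \<exists>y\<in>U. \<phi> k y \<noteq> 0}"
      by blast
  qed
  have "bdd_above (sum_abs_fv_pair \<phi> ` B)"
    using bdd admissible by (simp add: tvs_bounded_free_lcs_iff[OF B])
  then obtain M where M: "\<And>b. b \<in> B \<Longrightarrow> sum_abs_fv_pair \<phi> b \<le> M"
    by (auto simp: bdd_above_def)
  have "real k \<le> sum_abs_fv_pair \<phi> (bs k)" for k
  proof -
    have "fv_pair (bs k) (\<phi> k) = bs k (xs k) * \<phi> k (xs k)"
      using bsV[of k] \<psi>(3) by (intro fv_pair_eq_single) (auto simp: fv_space_def \<phi>_def)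
    also have "\<dots> = sgn (bs k (xs k)) * real k"
      using bs(2) \<psi>(2) by (simp add: \<phi>_def sgn_if)
    finally have "\<bar>fv_pair (bs k) (\<phi> k)\<bar> = real k"
      using bs(2) by (simp add: abs_mult)
    with abs_fv_pair_le[OF bsV, of k k] show ?thesis
      by simp
  qed
  then have "real (nat \<lceil>M\<rceil> + 1) \<le> M"
    using M[OF bs(1)] order_trans by blast
  then show False
    by linarith
qed

lemma sum_fun_apply: "(\<Sum>j\<in>J. f j) x = (\<Sum>j\<in>J. f j x)"
  by (induction J rule: infinite_finite_induct) auto

lemma finite_if_lin_indep_finite_support:
  assumes li: "lin_indep B" and F: "finite F" and supp: "\<And>b y. b \<in> B \<Longrightarrow> b y \<noteq> 0 \<Longrightarrow> y \<in> F"
  shows "finite B"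
proof -
  define sc :: "real \<Rightarrow> ('a \<Rightarrow> real) \<Rightarrow> ('a \<Rightarrow> real)" where "sc c f = (\<lambda>y. c * f y)" for c f
  interpret V: vector_space sc
    by unfold_locales (auto simp: sc_def fun_eq_iff algebra_simps)
  have indep: "\<not> V.dependent B"
  proof
    assume "V.dependent B"
    then obtain T u where T: "finite T" "T \<subseteq> B" "(\<Sum>v\<in>T. sc (u v) v) = 0" "\<exists>v\<in>T. u v \<noteq> 0"
      unfolding V.dependent_explicit by blast
    have "(\<lambda>y. \<Sum>v\<in>T. u v * v y) = (\<lambda>y. 0)"
      using T(3) unfolding fun_eq_iff sum_fun_apply sc_def by simp
    then have "\<forall>v\<in>T. u v = 0"
      using li T(1,2) unfolding lin_indep_def by blast
    with T(4) show False by blast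
  qed
  have span: "B \<subseteq> V.span (fv_delta ` F)"
  proof
    fix b assume "b \<in> B"
    then have "b = (\<lambda>y. \<Sum>x\<in>F. b x * fv_delta x y)"
      using supp by (intro fv_expansion[OF F]) blast
    also have "\<dots> = (\<Sum>x\<in>F. sc (b x) (fv_delta x))"
      by (simp add: fun_eq_iff sum_fun_apply sc_def)
    also have "\<dots> \<in> V.span (fv_delta ` F)"
      by (intro V.span_sum V.span_scale V.span_base) auto
    finally show "b \<in> V.span (fv_delta ` F)" .
  qed
  show ?thesis
    using V.independent_span_bound[OF finite_imageI[OF F] indep span] by blast
qed

lemma finite_bounded_lin_indep_if_finite_functionally_bounded:
  assumes "completely_regular_space X" "Hausdorff_space X"
    and "\<forall>A. functionally_bounded X A \<longrightarrow> finite A"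
    and "B \<subseteq> topspace (free_lcs X)" "tvs_bounded (free_lcs X) B" "lin_indep B"
  shows "finite B"
proof -
  have "functionally_bounded X (\<Union>b\<in>B. {x. b x \<noteq> 0})"
    using functionally_bounded_support[OF assms(1,2)] assms(4,5) by simp
  with assms(3) have "finite (\<Union>b\<in>B. {x. b x \<noteq> 0})"
    by blast
  then show ?thesis
    by (rule finite_if_lin_indep_finite_support[OF assms(6)]) blast
qed

section \<open>Compact sets with finite support\<close>

lemma Lebesgue_number_pseudometric:
  assumes S: "compactin T S"
    and cont: "\<And>a. a \<in> S \<Longrightarrow> continuous_map T euclideanreal (d a)"
    and triangle: "\<And>a b c. a \<in> S \<Longrightarrow> b \<in> S \<Longrightarrow> c \<in> S \<Longrightarrow> d a c \<le> d a b + d b c"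
    and refl: "\<And>a. a \<in> S \<Longrightarrow> d a a = 0"
    and balls: "\<And>a. a \<in> S \<Longrightarrow> \<exists>U\<in>\<U>. \<exists>r>0. \<forall>y\<in>S. d a y < r \<longrightarrow> y \<in> U"
  shows "\<exists>\<delta>>0. \<forall>a\<in>S. \<exists>U\<in>\<U>. \<forall>y\<in>S. d a y < \<delta> \<longrightarrow> y \<in> U"
proof -
  obtain Uf rf where Urf: "\<And>a. a \<in> S \<Longrightarrow> Uf a \<in> \<U> \<and> rf a > 0 \<and> (\<forall>y\<in>S. d a y < rf a \<longrightarrow> y \<in> Uf a)"
    using balls by metis
  define Ob where "Ob a = {y \<in> topspace T. d a y \<in> {..<rf a / 2}}" for a
  have "openin T (Ob a)" if "a \<in> S" for a
    unfolding Ob_def using cont[OF that] by (rule openin_continuous_map_preimage) simp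
  moreover have "S \<subseteq> \<Union>(Ob ` S)"
    using compactin_subset_topspace[OF S] refl Urf by (force simp: Ob_def)
  ultimately obtain \<F> where "finite \<F>" "\<F> \<subseteq> Ob ` S" "S \<subseteq> \<Union>\<F>"
    using S unfolding compactin_def by (metis (no_types, lifting) imageE)
  then obtain C where C: "C \<subseteq> S" "finite C" "S \<subseteq> \<Union>(Ob ` C)"
    by (metis finite_subset_image)
  define \<delta> where "\<delta> = Min (insert 1 ((\<lambda>a. rf a / 2) ` C))"
  have "\<delta> > 0"
    using C Urf by (auto simp: \<delta>_def)
  moreover have \<delta>: "\<delta> \<le> rf a / 2" if "a \<in> C" for a
    unfolding \<delta>_def by (rule Min_le) (use C that in auto)
  have "\<exists>U\<in>\<U>. \<forall>y\<in>S. d a y < \<delta> \<longrightarrow> y \<in> U" if a: "a \<in> S" for a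
  proof -
    obtain b where b: "b \<in> C" "a \<in> Ob b"
      using C(3) a by blast
    have "y \<in> Uf b" if y: "y \<in> S" "d a y < \<delta>" for y
    proof -
      have "d b y \<le> d b a + d a y"
        using C(1) b(1) a y(1) by (intro triangle) auto
      also have "\<dots> < rf b"
        using b(2) y(2) \<delta>[OF b(1)] by (simp add: Ob_def)
      finally show ?thesis
        using Urf[of b] C(1) b(1) y(1) by blast
    qed
    then show ?thesis
      using Urf[of b] C(1) b(1) by blast
  qed
  ultimately show ?thesis by blast
qed

lemma floor_mem_grid:
  fixes s v :: real
  assumes "s > 0" "\<bar>v - s * of_int z\<bar> < s"
  shows "z \<in> {\<lfloor>v / s\<rfloor>, \<lfloor>v / s\<rfloor> + 1}"
proof -
  have "of_int z - 1 < v / s" "v / s < of_int z + 1"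
    using assms by (auto simp: abs_less_iff field_simps)
  then have "\<lfloor>v / s\<rfloor> \<le> z" "z - 1 \<le> \<lfloor>v / s\<rfloor>"
    by (simp_all add: floor_le_iff le_floor_iff)
  then show ?thesis
    by (cases "z = \<lfloor>v / s\<rfloor>") auto
qed

lemma openin_finite_preimages:
  assumes "finite I" "\<And>i. i \<in> I \<Longrightarrow> continuous_map T euclideanreal (f i)" "\<And>i. i \<in> I \<Longrightarrow> open (A i)"
  shows "openin T {x \<in> topspace T. \<forall>i\<in>I. f i x \<in> A i}"
  using assms
proof (induction I rule: finite_induct)
  case (insert a I)
  have "openin T {x \<in> topspace T. f a x \<in> A a}"
    using insert.prems by (intro openin_continuous_map_preimage) auto
  moreover have "openin T {x \<in> topspace T. \<forall>i\<in>I. f i x \<in> A i}"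
    using insert by blast
  moreover have "{x \<in> topspace T. \<forall>i\<in>insert a I. f i x \<in> A i} =
      {x \<in> topspace T. f a x \<in> A a} \<inter> {x \<in> topspace T. \<forall>i\<in>I. f i x \<in> A i}"
    by blast
  ultimately show ?case
    by (simp only: openin_Int)
qed simp

definition grid_cell :: "'b topology \<Rightarrow> ('i \<Rightarrow> 'b \<Rightarrow> real) \<Rightarrow> 'i set \<Rightarrow> real \<Rightarrow> ('i \<Rightarrow> int) \<Rightarrow> 'b set" where
  "grid_cell T c F s z = {h \<in> topspace T. \<forall>x\<in>F. \<bar>c x h - s * of_int (z x)\<bar> < s}"

lemma openin_grid_cell:
  assumes "finite F" "\<And>x. x \<in> F \<Longrightarrow> continuous_map T euclideanreal (c x)"
  shows "openin T (grid_cell T c F s z)"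
proof -
  have "openin T {h \<in> topspace T. \<forall>x\<in>F. c x h \<in> ball (s * of_int (z x)) s}"
    using assms by (intro openin_finite_preimages) auto
  moreover have "{h \<in> topspace T. \<forall>x\<in>F. c x h \<in> ball (s * of_int (z x)) s} = grid_cell T c F s z"
    by (simp add: grid_cell_def dist_real_def abs_minus_commute)
  ultimately show ?thesis by simp
qed

lemma mem_grid_cell_floor:
  assumes "s > 0" "h \<in> topspace T"
  shows "h \<in> grid_cell T c F s (\<lambda>x. \<lfloor>c x h / s\<rfloor>)"
proof -
  have "\<bar>v - s * of_int \<lfloor>v / s\<rfloor>\<bar> < s" for v
  proof -
    have "s * of_int \<lfloor>v / s\<rfloor> \<le> s * (v / s)" "s * (v / s) < s * (of_int \<lfloor>v / s\<rfloor> + 1)"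
      using assms(1) by (intro mult_left_mono mult_strict_left_mono; linarith)+
    then show ?thesis
      using assms(1) by (simp add: abs_less_iff distrib_left)
  qed
  then show ?thesis
    using assms(2) by (simp add: grid_cell_def)
qed

lemma grid_cell_restrict: "grid_cell T c F s (restrict z F) = grid_cell T c F s z"
  by (simp add: grid_cell_def)

lemma grid_cell_dist_le:
  assumes "h \<in> grid_cell T c F s z" "h' \<in> grid_cell T c F s z"
  shows "(\<Sum>x\<in>F. \<bar>c x h' - c x h\<bar>) \<le> real (card F) * (2 * s)"
proof -
  have "(\<Sum>x\<in>F. \<bar>c x h' - c x h\<bar>) \<le> (\<Sum>x\<in>F. 2 * s)"
    using assms by (intro sum_mono) (fastforce simp: grid_cell_def)
  then show ?thesis by simp
qed

lemma card_grid_cells_containing_le: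
  assumes "finite F" "s > 0" "finite \<V>" "\<V> \<subseteq> grid_cell T c F s ` (F \<rightarrow>\<^sub>E UNIV)"
  shows "card {V\<in>\<V>. h \<in> V} \<le> 2 ^ card F"
proof -
  define P where "P = PiE F (\<lambda>x. {\<lfloor>c x h / s\<rfloor>, \<lfloor>c x h / s\<rfloor> + 1})"
  have "{V\<in>\<V>. h \<in> V} \<subseteq> grid_cell T c F s ` P"
  proof
    fix V assume "V \<in> {V\<in>\<V>. h \<in> V}"
    then obtain z where z: "z \<in> F \<rightarrow>\<^sub>E UNIV" "V = grid_cell T c F s z" "h \<in> V"
      using assms(4) by blast
    then have "z x \<in> {\<lfloor>c x h / s\<rfloor>, \<lfloor>c x h / s\<rfloor> + 1}" if "x \<in> F" for x
      using that assms(2) by (intro floor_mem_grid) (auto simp: grid_cell_def)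
    then have "z \<in> P"
      using z(1) by (auto simp: P_def PiE_iff)
    with z(2) show "V \<in> grid_cell T c F s ` P" by blast
  qed
  then have "card {V\<in>\<V>. h \<in> V} \<le> card (grid_cell T c F s ` P)"
    using assms(1) by (intro card_mono finite_imageI) (auto simp: P_def finite_PiE)
  also have "\<dots> \<le> card P"
    using assms(1) by (intro card_image_le) (simp add: P_def finite_PiE)
  also have "\<dots> = 2 ^ card F"
    using assms(1) by (simp add: P_def card_PiE numeral_2_eq_2)
  finally show ?thesis .
qed

lemma covering_dim_le_finite_coordinates:
  fixes c :: "'i \<Rightarrow> 'b \<Rightarrow> real"
  assumes T: "compactin T (topspace T)" and F: "finite F"
    and cont: "\<And>x. x \<in> F \<Longrightarrow> continuous_map T euclideanreal (c x)"
    and balls: "\<And>U h. openin T U \<Longrightarrow> h \<in> U \<Longrightarrow>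
      \<exists>r>0. \<forall>h'\<in>topspace T. (\<Sum>x\<in>F. \<bar>c x h' - c x h\<bar>) < r \<longrightarrow> h' \<in> U"
  shows "covering_dim_le T (2 ^ card F - 1)"
  unfolding covering_dim_le_def
proof (intro allI impI)
  fix \<U> assume \<U>: "finite \<U> \<and> (\<forall>U\<in>\<U>. openin T U) \<and> \<Union>\<U> = topspace T"
  define d where "d h h' = (\<Sum>x\<in>F. \<bar>c x h' - c x h\<bar>)" for h h'
  have "\<exists>r>0. \<forall>h\<in>topspace T. \<exists>U\<in>\<U>. \<forall>h'\<in>topspace T. d h h' < r \<longrightarrow> h' \<in> U"
  proof (rule Lebesgue_number_pseudometric[OF T])
    show "continuous_map T euclideanreal (d h)" for h
      unfolding d_def using F cont by (intro continuous_map_sum continuous_intros) auto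
    show "d a e \<le> d a b + d b e" for a b e
      unfolding d_def sum.distrib[symmetric] by (rule sum_mono) linarith
    show "d h h = 0" for h
      by (simp add: d_def)
    fix h assume "h \<in> topspace T"
    then have "h \<in> \<Union>\<U>"
      using \<U> by simp
    then obtain U where U: "U \<in> \<U>" "h \<in> U"
      by blast
    moreover have "openin T U"
      using \<U> U(1) by blast
    ultimately obtain e where "e > 0" "\<forall>h'\<in>topspace T. d h h' < e \<longrightarrow> h' \<in> U"
      using balls unfolding d_def by blast
    with U(1) show "\<exists>U\<in>\<U>. \<exists>r>0. \<forall>h'\<in>topspace T. d h h' < r \<longrightarrow> h' \<in> U"
      by blast
  qed
  then obtain r where "r > 0" and r: "\<And>h. h \<in> topspace T \<Longrightarrow> \<exists>U\<in>\<U>. \<forall>h'\<in>topspace T. d h h' < r \<longrightarrow> h' \<in> U"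
    by blast
  \<comment> \<open>Grid cells of side 2 s are smaller than the Lebesgue number r, and every point lies in at
    most 2 ^ card F of them.\<close>
  define s where "s = r / (2 * (real (card F) + 1))"
  have "s > 0"
    using \<open>r > 0\<close> by (simp add: s_def)
  have "real (card F) * (2 * s) < r"
    using \<open>r > 0\<close> by (simp add: s_def field_simps)
  let ?Q = "grid_cell T c F s"
  have "\<forall>V\<in>?Q ` (F \<rightarrow>\<^sub>E UNIV). openin T V"
    using F cont by (auto intro: openin_grid_cell)
  moreover have "topspace T \<subseteq> \<Union>(?Q ` (F \<rightarrow>\<^sub>E UNIV))"
  proof
    fix h assume "h \<in> topspace T"
    then have "h \<in> ?Q (restrict (\<lambda>x. \<lfloor>c x h / s\<rfloor>) F)"
      using mem_grid_cell_floor[OF \<open>s > 0\<close>] by (simp add: grid_cell_restrict)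
    moreover have "restrict (\<lambda>x. \<lfloor>c x h / s\<rfloor>) F \<in> F \<rightarrow>\<^sub>E UNIV"
      by simp
    ultimately show "h \<in> \<Union>(?Q ` (F \<rightarrow>\<^sub>E UNIV))"
      by (rule UN_I[rotated])
  qed
  ultimately obtain \<V> where \<V>: "finite \<V>" "\<V> \<subseteq> ?Q ` (F \<rightarrow>\<^sub>E UNIV)" "topspace T \<subseteq> \<Union>\<V>"
    using T[unfolded compactin_def, THEN conjunct2, rule_format, of "?Q ` (F \<rightarrow>\<^sub>E UNIV)"] by blast
  show "\<exists>\<V>. finite \<V> \<and> (\<forall>V\<in>\<V>. openin T V) \<and> \<Union>\<V> = topspace T \<and>
      (\<forall>V\<in>\<V>. \<exists>U\<in>\<U>. V \<subseteq> U) \<and> (\<forall>h\<in>topspace T. card {V\<in>\<V>. h \<in> V} \<le> 2 ^ card F - 1 + 1)"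
  proof (intro exI[of _ "\<V> - {{}}"] conjI ballI)
    show "finite (\<V> - {{}})" using \<V>(1) by simp
    show "openin T V" if "V \<in> \<V> - {{}}" for V
      using that \<V>(2) F cont by (auto intro: openin_grid_cell)
    show "\<Union>(\<V> - {{}}) = topspace T"
      using \<V>(2,3) by (auto simp: grid_cell_def)
    show "\<exists>U\<in>\<U>. V \<subseteq> U" if "V \<in> \<V> - {{}}" for V
    proof -
      obtain z h0 where V: "V = ?Q z" "h0 \<in> V"
        using \<open>V \<in> \<V> - {{}}\<close> \<V>(2) by blast
      then have "h0 \<in> topspace T"
        by (simp add: grid_cell_def)
      then obtain U where "U \<in> \<U>" "\<forall>h'\<in>topspace T. d h0 h' < r \<longrightarrow> h' \<in> U"
        using r by blast
      moreover have "d h0 h' < r" if "h' \<in> V" for h'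
        using grid_cell_dist_le[of h0 T c F s z h'] V that \<open>real (card F) * (2 * s) < r\<close>
        unfolding d_def by simp
      ultimately show ?thesis
        using V(1) by (auto simp: grid_cell_def)
    qed
    show "card {V \<in> \<V> - {{}}. h \<in> V} \<le> 2 ^ card F - 1 + 1" for h
    proof -
      have "card {V \<in> \<V> - {{}}. h \<in> V} \<le> card {V \<in> \<V>. h \<in> V}"
        using \<V>(1) by (intro card_mono) auto
      also have "\<dots> \<le> 2 ^ card F"
        using card_grid_cells_containing_le[OF F \<open>s > 0\<close> \<V>(1,2)] .
      finally show ?thesis by simp
    qed
  qed
qed

lemma continuous_map_free_lcs_coordinate:
  assumes "completely_regular_space X" "Hausdorff_space X" "finite F" "F \<subseteq> topspace X" "x \<in> F"
    and supp: "\<And>h y. h \<in> K \<Longrightarrow> h y \<noteq> 0 \<Longrightarrow> y \<in> F"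
  shows "continuous_map (subtopology (free_lcs X) K) euclideanreal (\<lambda>h. h x)"
proof -
  obtain \<psi> where \<psi>: "continuous_map X euclideanreal \<psi>" "\<psi> x = 1" "\<And>y. y \<in> F - {x} \<Longrightarrow> \<psi> y = 0"
    using completely_regular_separating_function[OF assms(1,2), of "F - {x}" x] assms(3-5) by blast
  have "fv_pair h \<psi> = h x" if "h \<in> K" for h
  proof -
    have "{y. h y \<noteq> 0} \<subseteq> F"
      using supp that by blast
    then have "finite {y. h y \<noteq> 0}"
      using assms(3) by (rule finite_subset)
    with \<psi>(2,3) supp that show ?thesis
      by (subst fv_pair_eq_single[of h x \<psi>]) auto
  qed
  moreover have "continuous_map (subtopology (free_lcs X) K) euclideanreal (\<lambda>h. fv_pair h \<psi>)"
    by (rule continuous_map_from_subtopology[OF continuous_map_fv_pair[OF \<psi>(1)]])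
  ultimately show ?thesis
    by (auto elim: continuous_map_eq)
qed

lemma free_lcs_open_contains_l1_ball:
  assumes F: "finite F" "F \<subseteq> topspace X" and K: "K \<subseteq> fv_space X"
    and supp: "\<And>h y. h \<in> K \<Longrightarrow> h y \<noteq> 0 \<Longrightarrow> y \<in> F"
    and U: "openin (subtopology (free_lcs X) K) U" "h \<in> U"
  shows "\<exists>r>0. \<forall>h'\<in>K. (\<Sum>x\<in>F. \<bar>h' x - h x\<bar>) < r \<longrightarrow> h' \<in> U"
proof -
  obtain W where W: "openin (free_lcs X) W" "U = W \<inter> K"
    using U(1) unfolding openin_subtopology by blast
  have hW: "h \<in> W" and hK: "h \<in> K"
    using U(2) unfolding W(2) by simp_all
  obtain p e where p: "admissible_seminorm X p" "e > 0" "fv_ball X p h e \<subseteq> W"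
    using openin_free_lcs_obtain_ball[OF W(1) hW] by blast
  have sp: "seminorm_on (fv_space X) p"
    using p(1) by (rule admissible_seminorm_imp_seminorm_on)
  have delta: "fv_delta x \<in> fv_space X" if "x \<in> F" for x
    using F(2) that by (blast intro: fv_delta_in_fv_space)
  define M where "M = 1 + (\<Sum>x\<in>F. p (fv_delta x))"
  have M: "p (fv_delta x) \<le> M" if "x \<in> F" for x
  proof -
    have "p (fv_delta x) \<le> (\<Sum>x\<in>F. p (fv_delta x))"
      using F(1) that delta seminorm_on_nonneg[OF sp] by (intro member_le_sum) auto
    then show ?thesis by (simp add: M_def)
  qed
  have "M > 0"
    unfolding M_def using delta seminorm_on_nonneg[OF sp] by (smt (verit) sum_nonneg)
  have "h' \<in> U" if h': "h' \<in> K" "(\<Sum>x\<in>F. \<bar>h' x - h x\<bar>) < e / M" for h'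
  proof -
    have "(\<lambda>y. h' y - h y) = (\<lambda>y. \<Sum>x\<in>F. (h' x - h x) * fv_delta x y)"
    proof (rule fv_expansion[OF F(1)])
      fix y assume "h' y - h y \<noteq> 0"
      then have "h' y \<noteq> 0 \<or> h y \<noteq> 0" by auto
      then show "y \<in> F" using supp h'(1) hK by blast
    qed
    then have "p (\<lambda>y. h' y - h y) \<le> (\<Sum>x\<in>F. \<bar>h' x - h x\<bar> * p (fv_delta x))"
      using seminorm_on_lincomb[OF sp F(1) delta, where c = "\<lambda>x. h' x - h x"] by simp
    also have "\<dots> \<le> (\<Sum>x\<in>F. \<bar>h' x - h x\<bar> * M)"
      using M by (intro sum_mono mult_left_mono) auto
    also have "\<dots> < e"
      using h'(2) \<open>M > 0\<close> by (simp add: sum_distrib_right[symmetric] pos_less_divide_eq)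
    finally have "h' \<in> W"
      using p(3) h'(1) K by blast
    with h'(1) show ?thesis unfolding W(2) by simp
  qed
  moreover have "e / M > 0"
    using p(2) \<open>M > 0\<close> by simp
  ultimately show ?thesis by blast
qed

lemma finite_dimensional_compact_if_finite_functionally_bounded:
  assumes cr: "completely_regular_space X" and hd: "Hausdorff_space X"
    and fin: "\<forall>A. functionally_bounded X A \<longrightarrow> finite A"
    and K: "compactin (free_lcs X) K"
  shows "finite_dimensional_space (subtopology (free_lcs X) K)"
proof -
  have KV: "K \<subseteq> fv_space X"
    using compactin_subset_topspace[OF K] by simp
  define F where "F = (\<Union>h\<in>K. {x. h x \<noteq> 0})"
  have F: "finite F"
    using fin functionally_bounded_support[OF cr hd KV compactin_imp_tvs_bounded[OF K]]
    by (simp add: F_def)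
  have FX: "F \<subseteq> topspace X"
    using KV by (auto simp: F_def fv_space_def)
  have supp: "\<And>h y. h \<in> K \<Longrightarrow> h y \<noteq> 0 \<Longrightarrow> y \<in> F"
    by (auto simp: F_def)
  have "covering_dim_le (subtopology (free_lcs X) K) (2 ^ card F - 1)"
  proof (rule covering_dim_le_finite_coordinates[OF _ F])
    show "compactin (subtopology (free_lcs X) K) (topspace (subtopology (free_lcs X) K))"
      using K KV by (simp add: compactin_subtopology Int_absorb1)
    show "continuous_map (subtopology (free_lcs X) K) euclideanreal (\<lambda>h. h x)" if "x \<in> F" for x
      using continuous_map_free_lcs_coordinate[OF cr hd F FX that supp] .
    show "\<exists>r>0. \<forall>h'\<in>topspace (subtopology (free_lcs X) K). (\<Sum>x\<in>F. \<bar>h' x - h x\<bar>) < r \<longrightarrow> h' \<in> U"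
      if "openin (subtopology (free_lcs X) K) U" "h \<in> U" for U h
      using free_lcs_open_contains_l1_ball[OF F FX KV supp that] KV by (simp add: Int_absorb1)
  qed
  then show ?thesis
    unfolding finite_dimensional_space_def by blast
qed

section \<open>Lebesgue's covering theorem\<close>

definition cube :: "nat \<Rightarrow> (nat \<Rightarrow> real) set" where
  "cube m = {l. (\<forall>i<m. 0 \<le> l i \<and> l i \<le> 1) \<and> (\<forall>i\<ge>m. l i = 0)}"

definition l1_dist :: "nat \<Rightarrow> (nat \<Rightarrow> real) \<Rightarrow> (nat \<Rightarrow> real) \<Rightarrow> real" where
  "l1_dist m l \<mu> = (\<Sum>i<m. \<bar>\<mu> i - l i\<bar>)"

lemma l1_dist_triangle: "l1_dist m a c \<le> l1_dist m a b + l1_dist m b c"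
  unfolding l1_dist_def sum.distrib[symmetric] by (rule sum_mono) linarith

lemma continuous_map_l1_dist: "continuous_map (powertop_real UNIV) euclideanreal (l1_dist m l)"
  unfolding l1_dist_def
  by (intro continuous_map_sum continuous_intros continuous_map_product_projection) auto

lemma compactin_cube: "compactin (powertop_real UNIV) (cube m)"
proof -
  have "cube m = PiE UNIV (\<lambda>i. if i < m then {0..1} else {0})"
    unfolding cube_def by (auto simp: PiE_iff split: if_splits)
  then show ?thesis
    by (simp add: compactin_PiE)
qed

lemma openin_cube_contains_l1_ball:
  assumes "openin (subtopology (powertop_real UNIV) (cube m)) W" "l \<in> W"
  shows "\<exists>r>0. \<forall>\<mu>\<in>cube m. l1_dist m l \<mu> < r \<longrightarrow> \<mu> \<in> W"
proof -
  obtain V where V: "openin (powertop_real UNIV) V" "W = V \<inter> cube m"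
    using assms(1) unfolding openin_subtopology by blast
  have l: "l \<in> V" "l \<in> cube m"
    using assms(2) unfolding V(2) by simp_all
  have "\<forall>x\<in>V. \<exists>U. finite {i. U i \<noteq> UNIV} \<and> (\<forall>i. open (U i)) \<and> x \<in> PiE UNIV U \<and> PiE UNIV U \<subseteq> V"
    using V(1) by (simp add: openin_product_topology_alt)
  then obtain U where U: "\<forall>i. open (U i)" "l \<in> PiE UNIV U" "PiE UNIV U \<subseteq> V"
    using l(1) by blast
  have "\<forall>i. \<exists>r>0. ball (l i) r \<subseteq> U i"
    using U(1,2) by (auto simp: PiE_iff open_contains_ball)
  then obtain R where R: "\<And>i. R i > 0" "\<And>i. ball (l i) (R i) \<subseteq> U i"
    by metis
  define r where "r = Min (insert 1 (R ` {..<m}))"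
  have "r > 0"
    using R(1) by (simp add: r_def)
  moreover have "\<mu> \<in> W" if \<mu>: "\<mu> \<in> cube m" "l1_dist m l \<mu> < r" for \<mu>
  proof -
    have "\<mu> i \<in> U i" for i
    proof (cases "i < m")
      case True
      have "\<bar>\<mu> i - l i\<bar> \<le> l1_dist m l \<mu>"
        unfolding l1_dist_def using True by (intro member_le_sum) auto
      also have "\<dots> < R i"
        using \<mu>(2) True by (simp add: r_def)
      finally show ?thesis
        using R(2)[of i] by (auto simp: dist_real_def)
    next
      case False
      then have "\<mu> i = l i"
        using \<mu>(1) l(2) by (simp add: cube_def)
      with U(2) show ?thesis by (simp add: PiE_iff)
    qed
    then have "\<mu> \<in> V"
      using U(3) by (auto simp: PiE_iff)
    with \<mu>(1) show ?thesis
      unfolding V(2) by simp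
  qed
  ultimately show ?thesis by blast
qed

lemma kuhn_cube_cover:
  assumes fin: "finite \<W>" and "\<delta> > 0"
    and leb: "\<And>l. l \<in> cube m \<Longrightarrow> \<exists>W\<in>\<W>. \<forall>\<mu>\<in>cube m. l1_dist m l \<mu> < \<delta> \<longrightarrow> \<mu> \<in> W"
    and faces: "\<And>W i. W \<in> \<W> \<Longrightarrow> i < m \<Longrightarrow> (\<forall>l\<in>W. l i \<noteq> 0) \<or> (\<forall>l\<in>W. l i \<noteq> 1)"
  shows "\<exists>l\<in>cube m. m + 1 \<le> card {W\<in>\<W>. l \<in> W}"
proof -
  define p :: nat where "p = nat \<lceil>real m / \<delta>\<rceil> + 1"
  have "p > 0" by (simp add: p_def)
  have "real m / \<delta> < real p"
    unfolding p_def by linarith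
  then have mp: "real m / real p < \<delta>"
    using \<open>\<delta> > 0\<close> \<open>p > 0\<close> by (simp add: field_simps)
  define \<gamma> where "\<gamma> v = (\<lambda>i. if i < m then real (v i) / real p else 0)" for v :: "nat \<Rightarrow> nat"
  have \<gamma>: "\<gamma> v \<in> cube m" if "\<forall>j. v j \<le> p" for v
    using that \<open>p > 0\<close> by (auto simp: cube_def \<gamma>_def)
  have "\<forall>v. \<exists>W. (\<forall>j. v j \<le> p) \<longrightarrow> W \<in> \<W> \<and> (\<forall>\<mu>\<in>cube m. l1_dist m (\<gamma> v) \<mu> < \<delta> \<longrightarrow> \<mu> \<in> W)"
    using leb \<gamma> by metis
  then obtain J where J: "\<And>v. \<forall>j. v j \<le> p \<Longrightarrow> J v \<in> \<W> \<and> (\<forall>\<mu>\<in>cube m. l1_dist m (\<gamma> v) \<mu> < \<delta> \<longrightarrow> \<mu> \<in> J v)"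
    by metis
  have \<gamma>J: "\<gamma> v \<in> J v" if "\<forall>j. v j \<le> p" for v
    using J[OF that] \<gamma>[OF that] \<open>\<delta> > 0\<close> by (simp add: l1_dist_def)
  \<comment> \<open>Vertex v of the grid of mesh 1/p is labelled by the faces l i = 1 met by the member J v of
    the cover around it; a fully labelled Kuhn simplex yields m + 1 distinct members J v, which all
    contain the image of its base vertex.\<close>
  define G :: "(nat \<Rightarrow> real) set \<Rightarrow> nat \<Rightarrow> nat"
    where "G = (\<lambda>W i. if \<exists>l\<in>W. l i = 1 then 1 else 0)"
  define lab where "lab = (\<lambda>v. G (J v))"
  have "\<forall>v j. (\<forall>j. v j \<le> p) \<and> j < m \<and> v j = 0 \<longrightarrow> lab v j = 0"
  proof (intro allI impI)
    fix v j assume v: "(\<forall>j. v j \<le> p) \<and> j < m \<and> v j = 0"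
    then have "\<gamma> v j = 0" by (simp add: \<gamma>_def)
    with v \<gamma>J faces[of "J v" j] J show "lab v j = 0"
      by (auto simp: lab_def G_def)
  qed
  moreover have "\<forall>v j. (\<forall>j. v j \<le> p) \<and> j < m \<and> v j = p \<longrightarrow> lab v j = 1"
  proof (intro allI impI)
    fix v j assume v: "(\<forall>j. v j \<le> p) \<and> j < m \<and> v j = p"
    then have "\<gamma> v j = 1" using \<open>p > 0\<close> by (simp add: \<gamma>_def)
    with v \<gamma>J show "lab v j = 1"
      by (auto simp: lab_def G_def)
  qed
  ultimately have "odd (card {s. ksimplex p m s \<and> (reduced m \<circ> lab) ` s = {..m}})"
    by (rule kuhn_combinatorial[OF \<open>p > 0\<close>])
  then have "{s. ksimplex p m s \<and> (reduced m \<circ> lab) ` s = {..m}} \<noteq> {}"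
    by (metis card.empty odd_card_imp_not_empty)
  then obtain s where s: "ksimplex p m s" "(reduced m \<circ> lab) ` s = {..m}"
    by blast
  then obtain b u where ks: "kuhn_simplex p m b u s"
    by (auto elim: ksimplex.cases)
  have "finite s"
    using ksimplex_card[OF s(1)] by (metis card_ge_0_finite zero_less_Suc)
  have sp: "\<forall>j. v j \<le> p" if "v \<in> s" for v
    using kuhn_simplex.s_le_p[OF ks that] by blast
  have "b \<in> s"
    by (rule kuhn_simplex.base_in_s[OF ks])
  have "\<gamma> b \<in> J v" if v: "v \<in> s" for v
  proof -
    have "l1_dist m (\<gamma> v) (\<gamma> b) \<le> (\<Sum>i<m. 1 / real p)"
      unfolding l1_dist_def
    proof (rule sum_mono)
      fix i assume "i \<in> {..<m}"
      have "b i \<le> v i" "v i \<le> Suc (b i)"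
        using kuhn_simplex.base_le[OF ks v] kuhn_simplex.le_Suc_base[OF ks v] by auto
      then have "\<bar>real (b i) - real (v i)\<bar> / real p \<le> 1 / real p"
        by (intro divide_right_mono) auto
      with \<open>i \<in> {..<m}\<close> show "\<bar>\<gamma> b i - \<gamma> v i\<bar> \<le> 1 / real p"
        by (simp add: \<gamma>_def diff_divide_distrib[symmetric])
    qed
    also have "\<dots> < \<delta>"
      using mp by simp
    finally show ?thesis
      using J[OF sp[OF v]] \<gamma>[OF sp[OF \<open>b \<in> s\<close>]] by blast
  qed
  then have "J ` s \<subseteq> {W\<in>\<W>. \<gamma> b \<in> W}"
    using J sp by blast
  then have "card (J ` s) \<le> card {W\<in>\<W>. \<gamma> b \<in> W}"
    using fin by (intro card_mono) auto
  moreover have "m + 1 \<le> card (J ` s)"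
  proof -
    have "{..m} = (reduced m \<circ> G) ` (J ` s)"
      using s(2) by (simp add: lab_def image_comp comp_def)
    then have "card {..m} \<le> card (J ` s)"
      by (metis card_image_le finite_imageI \<open>finite s\<close>)
    then show ?thesis by simp
  qed
  ultimately show ?thesis
    using \<gamma>[OF sp[OF \<open>b \<in> s\<close>]] by (meson order_trans)
qed

lemma Lebesgue_covering_cube:
  assumes "finite \<W>" "\<And>W. W \<in> \<W> \<Longrightarrow> openin (subtopology (powertop_real UNIV) (cube m)) W"
    and "\<Union>\<W> = cube m"
    and "\<And>W i. W \<in> \<W> \<Longrightarrow> i < m \<Longrightarrow> (\<forall>l\<in>W. l i \<noteq> 0) \<or> (\<forall>l\<in>W. l i \<noteq> 1)"
  shows "\<exists>l\<in>cube m. m + 1 \<le> card {W\<in>\<W>. l \<in> W}"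
proof -
  have "\<exists>\<delta>>0. \<forall>l\<in>cube m. \<exists>W\<in>\<W>. \<forall>\<mu>\<in>cube m. l1_dist m l \<mu> < \<delta> \<longrightarrow> \<mu> \<in> W"
  proof (rule Lebesgue_number_pseudometric)
    show "compactin (subtopology (powertop_real UNIV) (cube m)) (cube m)"
      by (simp add: compactin_subtopology compactin_cube)
    show "continuous_map (subtopology (powertop_real UNIV) (cube m)) euclideanreal (l1_dist m l)" for l
      by (rule continuous_map_from_subtopology[OF continuous_map_l1_dist])
    show "l1_dist m a c \<le> l1_dist m a b + l1_dist m b c" for a b c
      by (rule l1_dist_triangle)
    show "l1_dist m l l = 0" for l
      by (simp add: l1_dist_def)
    fix l assume "l \<in> cube m"
    then obtain W where W: "W \<in> \<W>" "l \<in> W"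
      using assms(3) by blast
    then show "\<exists>W\<in>\<W>. \<exists>r>0. \<forall>\<mu>\<in>cube m. l1_dist m l \<mu> < r \<longrightarrow> \<mu> \<in> W"
      using openin_cube_contains_l1_ball[OF assms(2)[OF W(1)] W(2)] by blast
  qed
  then obtain \<delta> where "\<delta> > 0" "\<And>l. l \<in> cube m \<Longrightarrow> \<exists>W\<in>\<W>. \<forall>\<mu>\<in>cube m. l1_dist m l \<mu> < \<delta> \<longrightarrow> \<mu> \<in> W"
    by blast
  then show ?thesis
    by (rule kuhn_cube_cover[OF assms(1) _ _ assms(4)])
qed

lemma le_covering_dim_if_cube:
  assumes dim: "covering_dim_le T n"
    and \<Phi>: "continuous_map (subtopology (powertop_real UNIV) (cube m)) T \<Phi>"
    and f: "\<And>i. i < m \<Longrightarrow> continuous_map T euclideanreal (f i)"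
    and coord: "\<And>i l. i < m \<Longrightarrow> l \<in> cube m \<Longrightarrow> f i (\<Phi> l) = l i"
  shows "m \<le> n"
proof -
  \<comment> \<open>No member of this cover meets two opposite faces of the embedded cube.\<close>
  define Us where "Us \<sigma> = {h \<in> topspace T. \<forall>i\<in>{..<m}. f i h \<in> (if \<sigma> i then {1/3<..} else {..<2/3})}"
    for \<sigma> :: "nat \<Rightarrow> bool"
  define \<U> where "\<U> = Us ` ({..<m} \<rightarrow>\<^sub>E UNIV)"
  have \<U>_finite: "finite \<U>"
    unfolding \<U>_def by (intro finite_imageI finite_PiE) auto
  have "openin T (Us \<sigma>)" for \<sigma>
    unfolding Us_def by (rule openin_finite_preimages) (auto intro: f)
  then have \<U>_open: "\<forall>U\<in>\<U>. openin T U"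
    by (auto simp: \<U>_def)
  have \<U>_cover: "\<Union>\<U> = topspace T"
  proof
    show "\<Union>\<U> \<subseteq> topspace T"
      by (auto simp: \<U>_def Us_def)
    show "topspace T \<subseteq> \<Union>\<U>"
    proof
      fix h assume "h \<in> topspace T"
      then have "h \<in> Us (restrict (\<lambda>i. 1/3 < f i h) {..<m})"
        by (auto simp: Us_def)
      moreover have "restrict (\<lambda>i. 1/3 < f i h) {..<m} \<in> {..<m} \<rightarrow>\<^sub>E UNIV"
        by simp
      ultimately show "h \<in> \<Union>\<U>"
        unfolding \<U>_def by blast
    qed
  qed
  have "\<exists>\<V>. finite \<V> \<and> (\<forall>V\<in>\<V>. openin T V) \<and> \<Union>\<V> = topspace T \<and>
      (\<forall>V\<in>\<V>. \<exists>U\<in>\<U>. V \<subseteq> U) \<and> (\<forall>h\<in>topspace T. card {V\<in>\<V>. h \<in> V} \<le> n + 1)"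
    by (rule dim[unfolded covering_dim_le_def, THEN spec, THEN mp]) (intro conjI \<U>_finite \<U>_open \<U>_cover)
  then obtain \<V> where \<V>: "finite \<V>" "\<forall>V\<in>\<V>. openin T V" "\<Union>\<V> = topspace T"
    "\<forall>V\<in>\<V>. \<exists>U\<in>\<U>. V \<subseteq> U" "\<forall>h\<in>topspace T. card {V\<in>\<V>. h \<in> V} \<le> n + 1"
    by (elim exE conjE) blast
  have \<Phi>_cube: "\<Phi> l \<in> topspace T" if "l \<in> cube m" for l
    using continuous_map_image_subset_topspace[OF \<Phi>] that by auto
  define W where "W V = {l \<in> cube m. \<Phi> l \<in> V}" for V
  have "\<exists>l\<in>cube m. m + 1 \<le> card {W'\<in>W ` \<V>. l \<in> W'}"
  proof (rule Lebesgue_covering_cube)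
    show "finite (W ` \<V>)"
      using \<V>(1) by simp
    show "openin (subtopology (powertop_real UNIV) (cube m)) W'" if "W' \<in> W ` \<V>" for W'
      using that \<V>(2) openin_continuous_map_preimage[OF \<Phi>] by (auto simp: W_def)
    show "\<Union>(W ` \<V>) = cube m"
    proof
      show "\<Union>(W ` \<V>) \<subseteq> cube m"
        by (auto simp: W_def)
      show "cube m \<subseteq> \<Union>(W ` \<V>)"
      proof
        fix l assume "l \<in> cube m"
        then have "\<Phi> l \<in> \<Union>\<V>"
          using \<V>(3) \<Phi>_cube by simp
        then obtain V where "V \<in> \<V>" "\<Phi> l \<in> V"
          by blast
        with \<open>l \<in> cube m\<close> show "l \<in> \<Union>(W ` \<V>)"
          by (auto simp: W_def)
      qed
    qed
    fix W' i assume W': "W' \<in> W ` \<V>" and "i < m"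
    then obtain V \<sigma> where "W' = W V" "V \<subseteq> Us \<sigma>"
      using \<V>(4) unfolding \<U>_def by blast
    then have "l i \<in> (if \<sigma> i then {1/3<..} else {..<2/3})" if "l \<in> W'" for l
    proof -
      have "\<Phi> l \<in> Us \<sigma>" "l \<in> cube m"
        using that \<open>W' = W V\<close> \<open>V \<subseteq> Us \<sigma>\<close> by (auto simp: W_def)
      with \<open>i < m\<close> coord show ?thesis
        by (simp add: Us_def)
    qed
    then show "(\<forall>l\<in>W'. l i \<noteq> 0) \<or> (\<forall>l\<in>W'. l i \<noteq> 1)"
      by (cases "\<sigma> i") fastforce+
  qed
  then obtain l where l: "l \<in> cube m" "m + 1 \<le> card {W'\<in>W ` \<V>. l \<in> W'}"
    by blast
  have "card {W'\<in>W ` \<V>. l \<in> W'} \<le> card (W ` {V\<in>\<V>. \<Phi> l \<in> V})"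
    using \<V>(1) by (intro card_mono) (auto simp: W_def)
  also have "\<dots> \<le> card {V\<in>\<V>. \<Phi> l \<in> V}"
    using \<V>(1) by (intro card_image_le) simp
  also have "\<dots> \<le> n + 1"
    using \<V>(5) \<Phi>_cube[OF l(1)] by blast
  finally show ?thesis
    using l(2) by simp
qed

section \<open>A compact set of infinite dimension\<close>

definition fv_comb :: "(nat \<Rightarrow> 'a) \<Rightarrow> nat \<Rightarrow> (nat \<Rightarrow> real) \<Rightarrow> 'a \<Rightarrow> real" where
  "fv_comb a m l = (\<lambda>y. \<Sum>i<m. l i * fv_delta (a i) y)"

lemma fv_comb_in_fv_space: "(\<And>i. i < m \<Longrightarrow> a i \<in> topspace X) \<Longrightarrow> fv_comb a m l \<in> fv_space X"
  unfolding fv_comb_def by (intro fv_space_sum fv_space_scale fv_delta_in_fv_space) auto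

lemma fv_comb_diff: "(\<lambda>y. fv_comb a m \<mu> y - fv_comb a m l y) = fv_comb a m (\<lambda>i. \<mu> i - l i)"
  by (simp add: fv_comb_def fun_eq_iff sum_subtractf[symmetric] left_diff_distrib)

lemma seminorm_fv_comb_le:
  assumes "seminorm_on (fv_space X) p" "\<And>i. i < m \<Longrightarrow> a i \<in> topspace X"
    and "\<And>i. i < m \<Longrightarrow> p (fv_delta (a i)) \<le> M"
  shows "p (fv_comb a m l) \<le> M * (\<Sum>i<m. \<bar>l i\<bar>)"
proof -
  have "p (fv_comb a m l) \<le> (\<Sum>i<m. \<bar>l i\<bar> * p (fv_delta (a i)))"
    unfolding fv_comb_def using assms(1,2) by (intro seminorm_on_lincomb) (auto intro: fv_delta_in_fv_space)
  also have "\<dots> \<le> (\<Sum>i<m. \<bar>l i\<bar> * M)"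
    using assms(3) by (intro sum_mono mult_left_mono) auto
  also have "\<dots> = M * (\<Sum>i<m. \<bar>l i\<bar>)"
    by (simp add: sum_distrib_left mult.commute)
  finally show ?thesis .
qed

lemma fv_comb_apply:
  assumes "inj_on a {..<m}" "i < m"
  shows "fv_comb a m l (a i) = l i"
proof -
  have "fv_comb a m l (a i) = (\<Sum>j<m. if j = i then l j else 0)"
    unfolding fv_comb_def using assms by (intro sum.cong) (auto simp: fv_delta_def inj_on_eq_iff)
  then show ?thesis
    using assms(2) by simp
qed

lemma fv_comb_nonzero: "fv_comb a m l y \<noteq> 0 \<Longrightarrow> y \<in> a ` {..<m}"
  unfolding fv_comb_def by (rule ccontr) (auto simp: fv_delta_def intro!: sum.neutral)

lemma continuous_map_fv_comb:
  assumes "\<And>i. i < m \<Longrightarrow> a i \<in> topspace X"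
  shows "continuous_map (powertop_real UNIV) (free_lcs X) (fv_comb a m)"
proof (rule continuous_map_into_free_lcs)
  show "fv_comb a m l \<in> fv_space X" for l
    using assms by (rule fv_comb_in_fv_space)
  fix p l and e :: real
  assume p: "admissible_seminorm X p" and "e > 0"
  have sp: "seminorm_on (fv_space X) p"
    using p by (rule admissible_seminorm_imp_seminorm_on)
  define M where "M = (\<Sum>i<m. p (fv_delta (a i)))"
  have M: "p (fv_delta (a i)) \<le> M" if "i < m" for i
    unfolding M_def using that assms seminorm_on_nonneg[OF sp]
    by (intro member_le_sum) (auto intro: fv_delta_in_fv_space)
  have "M \<ge> 0"
    unfolding M_def using assms seminorm_on_nonneg[OF sp] by (auto intro: sum_nonneg fv_delta_in_fv_space)
  define W where "W = {\<mu> \<in> topspace (powertop_real UNIV). l1_dist m l \<mu> \<in> {..<e / (M + 1)}}"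
  have "openin (powertop_real UNIV) W"
    unfolding W_def by (rule openin_continuous_map_preimage[OF continuous_map_l1_dist]) simp
  moreover have "l \<in> W"
    using \<open>e > 0\<close> \<open>M \<ge> 0\<close> by (simp add: W_def l1_dist_def)
  moreover have "p (\<lambda>t. fv_comb a m \<mu> t - fv_comb a m l t) < e" if "\<mu> \<in> W" for \<mu>
  proof -
    have "p (\<lambda>t. fv_comb a m \<mu> t - fv_comb a m l t) \<le> M * l1_dist m l \<mu>"
      unfolding fv_comb_diff l1_dist_def using seminorm_fv_comb_le[OF sp assms M] .
    also have "\<dots> \<le> M * (e / (M + 1))"
      using that \<open>M \<ge> 0\<close> by (intro mult_left_mono) (auto simp: W_def)
    also have "\<dots> < e"
      using \<open>e > 0\<close> \<open>M \<ge> 0\<close> by (simp add: field_simps)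
    finally show ?thesis .
  qed
  ultimately show "\<exists>W. openin (powertop_real UNIV) W \<and> l \<in> W \<and>
      (\<forall>\<mu>\<in>W. p (\<lambda>t. fv_comb a m \<mu> t - fv_comb a m l t) < e)"
    by blast
qed

lemma continuous_map_powertop_divide:
  "continuous_map (powertop_real UNIV) (powertop_real UNIV) (\<lambda>l i. l i / c)"
  unfolding continuous_map_componentwise_UNIV divide_inverse
  by (intro allI continuous_intros continuous_map_product_projection) auto

lemma compactin_insert_Union_shrinking:
  fixes C :: "nat \<Rightarrow> 'a set"
  assumes C: "\<And>m. compactin X (C m)" and x: "x \<in> topspace X"
    and shrink: "\<And>U. openin X U \<Longrightarrow> x \<in> U \<Longrightarrow> \<exists>N. \<forall>m\<ge>N. C m \<subseteq> U"
  shows "compactin X (insert x (\<Union>m. C m))"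
  unfolding compactin_def
proof (intro conjI allI impI)
  show "insert x (\<Union>m. C m) \<subseteq> topspace X"
    using C x compactin_subset_topspace by blast
  fix \<U> assume \<U>: "(\<forall>U\<in>\<U>. openin X U) \<and> insert x (\<Union>m. C m) \<subseteq> \<Union>\<U>"
  then obtain U where U: "U \<in> \<U>" "x \<in> U"
    by blast
  moreover have "openin X U"
    using \<U> U(1) by blast
  ultimately obtain N where N: "\<forall>m\<ge>N. C m \<subseteq> U"
    using shrink by blast
  have "compactin X (\<Union>m<N. C m)"
    by (intro compactin_Union finite_imageI finite_lessThan) (auto intro: C)
  then have "\<exists>\<F>. finite \<F> \<and> \<F> \<subseteq> \<U> \<and> (\<Union>m<N. C m) \<subseteq> \<Union>\<F>"
    by (rule compactin_def[THEN iffD1, THEN conjunct2, rule_format]) (use \<U> in blast)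
  then obtain \<F> where \<F>: "finite \<F>" "\<F> \<subseteq> \<U>" "(\<Union>m<N. C m) \<subseteq> \<Union>\<F>"
    by blast
  have "insert x (\<Union>m. C m) \<subseteq> \<Union>(insert U \<F>)"
  proof
    fix y assume "y \<in> insert x (\<Union>m. C m)"
    then consider "y = x" | m where "y \<in> C m"
      by blast
    then show "y \<in> \<Union>(insert U \<F>)"
    proof cases
      case (2 m)
      then show ?thesis
      proof (cases "m < N")
        case False
        then have "C m \<subseteq> U"
          using N by (simp add: not_less)
        with 2 show ?thesis by blast
      qed (use \<F>(3) 2 in blast)
    qed (use U in blast)
  qed
  with \<F> U(1) show "\<exists>\<F>. finite \<F> \<and> \<F> \<subseteq> \<U> \<and> insert x (\<Union>m. C m) \<subseteq> \<Union>\<F>"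
    by (intro exI[of _ "insert U \<F>"]) auto
qed

(* The factor 1/(m+1)^2 makes the m-th cube shrink to 0 in every admissible seminorm. *)
lemma compactin_fv_comb_cubes:
  assumes A: "functionally_bounded X A" and a: "range a \<subseteq> A"
  shows "compactin (free_lcs X)
    (insert (\<lambda>y. 0) (\<Union>m. (\<lambda>l. fv_comb a m (\<lambda>i. l i / (real m + 1)\<^sup>2)) ` cube m))"
proof (rule compactin_insert_Union_shrinking)
  have aX: "a i \<in> topspace X" for i
    using A a by (auto simp: functionally_bounded_def)
  show "compactin (free_lcs X) ((\<lambda>l. fv_comb a m (\<lambda>i. l i / (real m + 1)\<^sup>2)) ` cube m)" for m
    using continuous_map_compose[OF continuous_map_powertop_divide continuous_map_fv_comb[OF aX]]
    by (intro image_compactin[OF compactin_cube]) (simp add: comp_def)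
  show "(\<lambda>y. 0) \<in> topspace (free_lcs X)"
    by simp
  fix U assume "openin (free_lcs X) U" "(\<lambda>y. 0) \<in> U"
  then obtain p e where p: "admissible_seminorm X p" "e > 0" "fv_ball X p (\<lambda>y. 0) e \<subseteq> U"
    by (rule openin_free_lcs_obtain_ball)
  have sp: "seminorm_on (fv_space X) p"
    using p(1) by (rule admissible_seminorm_imp_seminorm_on)
  obtain M where M: "\<And>x. x \<in> A \<Longrightarrow> p (fv_delta x) \<le> M" "M \<ge> 0"
  proof -
    obtain M0 where "\<And>x. x \<in> A \<Longrightarrow> p (fv_delta x) \<le> M0"
      using functionally_bounded_imp_bdd_above[OF A continuous_map_admissible_seminorm_delta[OF p(1)]]
      by (auto simp: bdd_above_def)
    then show ?thesis
      by (intro that[of "max M0 0"]) (auto intro: le_max_iff_disj[THEN iffD2])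
  qed
  obtain N :: nat where N: "M / e < real N"
    using reals_Archimedean2 by blast
  have "fv_comb a m (\<lambda>i. l i / (real m + 1)\<^sup>2) \<in> U" if "N \<le> m" "l \<in> cube m" for m l
  proof -
    have "p (fv_comb a m (\<lambda>i. l i / (real m + 1)\<^sup>2)) \<le> M * (\<Sum>i<m. \<bar>l i / (real m + 1)\<^sup>2\<bar>)"
      using a by (intro seminorm_fv_comb_le[OF sp aX M(1)]) auto
    also have "\<dots> \<le> M * (\<Sum>i<m. 1 / (real m + 1)\<^sup>2)"
      using that(2) M(2) by (intro mult_left_mono sum_mono) (auto simp: cube_def divide_right_mono)
    also have "\<dots> \<le> M * (1 / (real m + 1))"
    proof (intro mult_left_mono M(2))
      have "(\<Sum>i<m. 1 / (real m + 1)\<^sup>2) \<le> (real m + 1) / (real m + 1)\<^sup>2"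
        by (simp add: divide_right_mono)
      then show "(\<Sum>i<m. 1 / (real m + 1)\<^sup>2) \<le> 1 / (real m + 1)"
        by (simp add: power2_eq_square)
    qed
    also have "\<dots> < e"
    proof -
      have "M < e * real N"
        using N p(2) by (simp add: field_simps)
      also have "\<dots> \<le> e * (real m + 1)"
        using that(1) p(2) by simp
      finally show ?thesis
        by (simp add: field_simps)
    qed
    finally have "fv_comb a m (\<lambda>i. l i / (real m + 1)\<^sup>2) \<in> fv_ball X p (\<lambda>y. 0) e"
      using fv_comb_in_fv_space[OF aX] by simp
    with p(3) show ?thesis by blast
  qed
  then show "\<exists>N. \<forall>m\<ge>N. (\<lambda>l. fv_comb a m (\<lambda>i. l i / (real m + 1)\<^sup>2)) ` cube m \<subseteq> U"
    by blast
qed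

lemma finite_functionally_bounded_if_finite_dimensional_compacts:
  assumes cr: "completely_regular_space X" and hd: "Hausdorff_space X"
    and fd: "\<forall>K. compactin (free_lcs X) K \<longrightarrow> finite_dimensional_space (subtopology (free_lcs X) K)"
    and A: "functionally_bounded X A"
  shows "finite A"
proof (rule ccontr)
  assume "infinite A"
  then obtain a :: "nat \<Rightarrow> 'a" where a: "inj a" "range a \<subseteq> A"
    using infinite_countable_subset by blast
  have aX: "a i \<in> topspace X" for i
    using A a(2) by (auto simp: functionally_bounded_def)
  define K where "K = insert (\<lambda>y. 0) (\<Union>m. (\<lambda>l. fv_comb a m (\<lambda>i. l i / (real m + 1)\<^sup>2)) ` cube m)"
  obtain n where n: "covering_dim_le (subtopology (free_lcs X) K) n"
    using fd compactin_fv_comb_cubes[OF A a(2)] unfolding K_def finite_dimensional_space_def by blast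
  define m where "m = Suc n"
  define c where "c = (real m + 1)\<^sup>2"
  have "\<forall>i. \<exists>\<psi>. continuous_map X euclideanreal \<psi> \<and> \<psi> (a i) = 1 \<and> (\<forall>j. j \<noteq> i \<longrightarrow> j < m \<longrightarrow> \<psi> (a j) = 0)"
  proof
    fix i
    have "a i \<notin> a ` ({..<m} - {i})"
      using a(1) by (auto simp: inj_eq)
    then obtain \<psi> where "continuous_map X euclideanreal \<psi>" "\<psi> (a i) = 1" "\<And>y. y \<in> a ` ({..<m} - {i}) \<Longrightarrow> \<psi> y = 0"
      using completely_regular_separating_function[OF cr hd, of "a ` ({..<m} - {i})" "a i"] aX by blast
    then show "\<exists>\<psi>. continuous_map X euclideanreal \<psi> \<and> \<psi> (a i) = 1 \<and> (\<forall>j. j \<noteq> i \<longrightarrow> j < m \<longrightarrow> \<psi> (a j) = 0)"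
      by blast
  qed
  then obtain \<psi> where \<psi>: "\<And>i. continuous_map X euclideanreal (\<psi> i)" "\<And>i. \<psi> i (a i) = 1"
    "\<And>i j. j \<noteq> i \<Longrightarrow> j < m \<Longrightarrow> \<psi> i (a j) = 0"
    by metis
  have "m \<le> n"
  proof (rule le_covering_dim_if_cube[OF n])
    show "continuous_map (subtopology (powertop_real UNIV) (cube m)) (subtopology (free_lcs X) K)
        (\<lambda>l. fv_comb a m (\<lambda>i. l i / c))"
      using continuous_map_compose[OF continuous_map_powertop_divide continuous_map_fv_comb[OF aX]]
      by (intro continuous_map_into_subtopology continuous_map_from_subtopology)
        (auto simp: comp_def K_def c_def)
    show "continuous_map (subtopology (free_lcs X) K) euclideanreal (\<lambda>h. c * fv_pair h (\<psi> i))" for i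
      by (intro continuous_intros continuous_map_from_subtopology continuous_map_fv_pair \<psi>(1))
    fix i l assume "i < m" "l \<in> cube m"
    have "fv_pair (fv_comb a m (\<lambda>i. l i / c)) (\<psi> i) = fv_comb a m (\<lambda>i. l i / c) (a i) * \<psi> i (a i)"
    proof (rule fv_pair_eq_single)
      have "fv_comb a m (\<lambda>i. l i / c) \<in> fv_space X"
        using aX by (rule fv_comb_in_fv_space)
      then show "finite {y. fv_comb a m (\<lambda>i. l i / c) y \<noteq> 0}"
        by (simp add: fv_space_def)
      fix y assume y: "fv_comb a m (\<lambda>i. l i / c) y \<noteq> 0" "y \<noteq> a i"
      from y(1) have "y \<in> a ` {..<m}"
        by (rule fv_comb_nonzero)
      then obtain j where j: "j < m" "y = a j"
        by blast
      with y(2) have "j \<noteq> i"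
        by blast
      with j show "\<psi> i y = 0"
        by (simp add: \<psi>(3))
    qed
    also have "\<dots> = l i / c"
      using \<open>i < m\<close> a(1) \<psi>(2) by (simp add: fv_comb_apply inj_on_subset)
    finally show "c * fv_pair (fv_comb a m (\<lambda>i. l i / c)) (\<psi> i) = l i"
      by (simp add: c_def)
  qed
  then show False
    by (simp add: m_def)
qed

theorem proposition2p2:
  fixes X :: "'a topology"
  assumes "completely_regular_space X" and "Hausdorff_space X"
  shows "((\<forall>K. compactin (free_lcs X) K \<longrightarrow>
              finite_dimensional_space (subtopology (free_lcs X) K))
          \<longleftrightarrow> (\<forall>B. B \<subseteq> topspace (free_lcs X) \<and> tvs_bounded (free_lcs X) B \<and> lin_indep B
                   \<longrightarrow> finite B))
       \<and> ((\<forall>B. B \<subseteq> topspace (free_lcs X) \<and> tvs_bounded (free_lcs X) B \<and> lin_indep B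
                   \<longrightarrow> finite B)
          \<longleftrightarrow> (\<forall>B. functionally_bounded X B \<longrightarrow> finite B))"
proof -
  let ?compact = "\<forall>K. compactin (free_lcs X) K \<longrightarrow> finite_dimensional_space (subtopology (free_lcs X) K)"
  let ?bounded = "\<forall>B. B \<subseteq> topspace (free_lcs X) \<and> tvs_bounded (free_lcs X) B \<and> lin_indep B \<longrightarrow> finite B"
  let ?fb = "\<forall>B. functionally_bounded X B \<longrightarrow> finite B"
  have "?bounded \<Longrightarrow> ?fb"
    using finite_functionally_bounded_if_finite_bounded_lin_indep by blast
  moreover have "?fb \<Longrightarrow> ?bounded"
    using finite_bounded_lin_indep_if_finite_functionally_bounded[OF assms] by blast
  moreover have "?fb \<Longrightarrow> ?compact"
    using finite_dimensional_compact_if_finite_functionally_bounded[OF assms] by blast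
  moreover have "?compact \<Longrightarrow> ?fb"
    using finite_functionally_bounded_if_finite_dimensional_compacts[OF assms] by blast
  ultimately show ?thesis
    by blast
qed

end
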